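(* Let $b$ be a unit speed geodesic ray in $X_A$ starting at $\mathfrak o$. Then $b$ is $\kappa$--contracting if and only if there exists a constant $c$ such that whenever $b([t_1,t_2])$ is contained in a single flat, $|t_1-t_2|\le c\,\kappa(t_1)$.
   Context: $A=\mathbb Z^2*\mathbb Z=\langle g_1,g_2,g_3\mid[g_1,g_2]\rangle$. $X_A$ is the universal cover of its Salvetti complex (a square torus with a circle attached), a CAT(0) "tree of flats": it consists of flats, each isometric to the Euclidean plane tiled by unit squares (with sides labelled $g_1,g_2$, meeting at right angles), corresponding to cosets of $\langle g_1,g_2\rangle$, together with edges of length 1 labelled $g_3$ attached at lattice points; the closest point projection of a flat to another flat is a single point. The base point $\mathfrak o$ is a lattice point of a flat $Y_0$ at which a $g_3$ edge is attached. $\|x\|=d(\mathfrak o,x)$; $\kappa:[0,\infty)\to[1,\infty)$ monotone increasing, concave, sublinear; $\kappa(x)=\kappa(\|x\|)$. A closed set $Z$ is $\kappa$--contracting if there is $c_Z$ with $\operatorname{diam}(x_Z\cup y_Z)\le c_Z\kappa(x)$ whenever $d(x,y)\le d(x,Z)$, where $x_Z$ is the set of nearest points of $Z$ to $x$. *)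

theory Defs
  imports "HOL-Analysis.Analysis"
begin

text \<open>Concrete model of X_A, the universal cover of the Salvetti complex of
  A = Z^2 * Z = <g1,g2,g3 | [g1,g2]>, as a tree of flats.

  Every flat is addressed by a reduced list of steps starting from the base flat Y0.
  A step ((a,b), e) means: leave the current flat at the lattice point (a,b)
  (coordinates of the current flat, whose origin is the point where the flat was
  entered; for Y0 the origin is the base point o) along the g3-edge with
  orientation e (True: g3, False: g3^-1), arriving at the origin of the next flat.
  Reducedness: one may not go straight back along the edge one came in by.

  A point is  XPt L (Inl v)  (point v of the flat L, v in R^2), or
  XPt L (Inr s) with L nonempty and 0 < s < 1: the point at distance s from the
  origin of flat L on the g3-edge through which flat L is entered.\<close>

type_synonym step = "(int \<times> int) \<times> bool"

datatype xa_pt = XPt "step list" "(real \<times> real) + real"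

fun reduced :: "step list \<Rightarrow> bool" where
  "reduced (r1 # r2 # rs) =
     (\<not> (fst r2 = (0, 0) \<and> snd r2 = (\<not> snd r1)) \<and> reduced (r2 # rs))"
| "reduced _ = True"

definition XA :: "xa_pt set" where
  "XA = {XPt L p | L p. reduced L \<and>
           (\<forall>s. p = Inr s \<longrightarrow> L \<noteq> [] \<and> 0 < s \<and> s < 1)}"

definition base_pt :: xa_pt where
  "base_pt = XPt [] (Inl (0, 0))"

text \<open>The flat addressed by L (a coset of <g1,g2>), as a set of points.\<close>
definition flat :: "step list \<Rightarrow> xa_pt set" where
  "flat L = {XPt L (Inl v) | v. True}"

definition lat :: "int \<times> int \<Rightarrow> real \<times> real" where
  "lat p = (real_of_int (fst p), real_of_int (snd p))"

fun lcp :: "'a list \<Rightarrow> 'a list \<Rightarrow> 'a list" where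
  "lcp (x # xs) (y # ys) = (if x = y then x # lcp xs ys else [])"
| "lcp _ _ = []"

fun pdist :: "(real \<times> real) + real \<Rightarrow> (real \<times> real) + real \<Rightarrow> real" where
  "pdist (Inl v) (Inl w) = dist v w"
| "pdist (Inr s) (Inr t) = \<bar>s - t\<bar>"
| "pdist (Inl v) (Inr s) = norm v + s"
| "pdist (Inr s) (Inl v) = norm v + s"

text \<open>Distance from a position attached to flat L to a lattice point of flat L.\<close>
fun wdist :: "(real \<times> real) + real \<Rightarrow> int \<times> int \<Rightarrow> real" where
  "wdist (Inl v) g = dist v (lat g)"
| "wdist (Inr s) g = s + norm (lat g)"

fun lenpos :: "(real \<times> real) + real \<Rightarrow> real" where
  "lenpos (Inl v) = norm v + 1"
| "lenpos (Inr s) = 1 - s"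

definition gate :: "step list \<Rightarrow> nat \<Rightarrow> int \<times> int" where
  "gate L n = fst (L ! n)"

text \<open>Distance from the point XPt L p to the lattice point gate L n of its ancestor
  flat take n L (for n < length L).\<close>
definition up :: "step list \<Rightarrow> (real \<times> real) + real \<Rightarrow> nat \<Rightarrow> real" where
  "up L p n = lenpos p + (\<Sum>r\<leftarrow>tl (drop n L). norm (lat (fst r)) + 1)"

text \<open>The CAT(0) (piecewise Euclidean, unit edges) metric of X_A.\<close>
fun dXA :: "xa_pt \<Rightarrow> xa_pt \<Rightarrow> real" where
  "dXA (XPt L1 p1) (XPt L2 p2) =
     (let n = length (lcp L1 L2) in
      if L1 = L2 then pdist p1 p2
      else if length L1 = n then wdist p1 (gate L2 n) + up L2 p2 n
      else if length L2 = n then up L1 p1 n + wdist p2 (gate L1 n)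
      else up L1 p1 n + dist (lat (gate L1 n)) (lat (gate L2 n)) + up L2 p2 n)"

definition geodesic_ray :: "(real \<Rightarrow> xa_pt) \<Rightarrow> bool" where
  "geodesic_ray b \<longleftrightarrow> b 0 = base_pt \<and> (\<forall>t\<ge>0. b t \<in> XA) \<and>
     (\<forall>s\<ge>0. \<forall>t\<ge>0. dXA (b s) (b t) = \<bar>s - t\<bar>)"

definition kappa_fn :: "(real \<Rightarrow> real) \<Rightarrow> bool" where
  "kappa_fn k \<longleftrightarrow> (\<forall>t\<ge>0. 1 \<le> k t) \<and> mono_on {0..} k \<and> concave_on {0..} k \<and>
     ((\<lambda>t. k t / t) \<longlongrightarrow> 0) at_top"

definition setdist :: "xa_pt \<Rightarrow> xa_pt set \<Rightarrow> real" where
  "setdist x Z = Inf (dXA x ` Z)"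

definition nearest :: "xa_pt \<Rightarrow> xa_pt set \<Rightarrow> xa_pt set" where
  "nearest x Z = {z \<in> Z. dXA x z = setdist x Z}"

definition xdiam :: "xa_pt set \<Rightarrow> real" where
  "xdiam S = Sup {dXA a c | a c. a \<in> S \<and> c \<in> S}"

definition kappa_contracting :: "(real \<Rightarrow> real) \<Rightarrow> xa_pt set \<Rightarrow> bool" where
  "kappa_contracting k Z \<longleftrightarrow> (\<exists>c. \<forall>x\<in>XA. \<forall>y\<in>XA.
      dXA x y \<le> setdist x Z \<longrightarrow>
      xdiam (nearest x Z \<union> nearest y Z) \<le> c * k (dXA base_pt x))"

end

theory Submission
  imports Defs
begin

text \<open>Distances in \<open>X_A\<close> are computed through its tree of flats: a geodesic between points in
  different branches at a flat passes through the lattice points where those branches are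
  attached. Crossing such a gate away from the ray \<open>b\<close> never brings a point closer to \<open>b\<close>, so
  when \<open>d(x, y) \<le> d(x, b)\<close> all nearest points of \<open>x\<close> and \<open>y\<close> on \<open>b\<close> lie in one flat segment of
  \<open>b\<close>, starting at distance at most \<open>4 \<parallel>x\<parallel>\<close>; the flat bound, monotonicity and subadditivity of
  \<open>\<kappa>\<close> then give the contraction estimate. Conversely, translating a flat segment
  \<open>b[t1, t2]\<close> perpendicularly by its own length yields points \<open>x\<close>, \<open>y\<close> with \<open>d(x, y) = d(x, b)\<close>
  whose nearest points are the two endpoints of the segment, so \<open>t2 - t1 \<le> c \<kappa>(\<parallel>x\<parallel>)\<close> with
  \<open>\<parallel>x\<parallel> \<le> t2\<close>; sublinearity of \<open>\<kappa>\<close> turns \<open>\<kappa>(t2)\<close> into \<open>\<kappa>(t1)\<close>.\<close>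

section \<open>Euclidean plane and concave functions\<close>

lemma orthogonal_if_dist_additive:
  fixes a c p n :: "'a::real_inner"
  assumes "orthogonal (c - a) n" and "a \<noteq> c"
    and "dist a p = dist a c + dist c p \<or> dist c p = dist c a + dist a p \<or>
         dist a c = dist a p + dist p c"
  shows "orthogonal (p - a) n"
proof -
  have ca: "inner (c - a) n = 0"
    using assms(1) by (simp add: orthogonal_def)
  have scaled: "norm (u - v) * inner (v - w) n = norm (v - w) * inner (u - v) n"
    if "dist u w = dist u v + dist v w" for u v w
    using that unfolding dist_triangle_eq by (metis inner_scaleR_left)
  from assms(3) show ?thesis
  proof (elim disjE)
    assume "dist a p = dist a c + dist c p"
    from scaled[OF this] have "norm (a - c) * inner (c - p) n = 0"
      using ca by (simp add: inner_diff_left)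
    then show ?thesis
      using assms(2) ca by (simp add: orthogonal_def inner_diff_left)
  next
    assume "dist c p = dist c a + dist a p"
    from scaled[OF this] have "norm (c - a) * inner (a - p) n = 0"
      using ca by simp
    then show ?thesis
      using assms(2) by (simp add: orthogonal_def inner_diff_left)
  next
    assume "dist a c = dist a p + dist p c"
    from scaled[OF this] have "(norm (a - p) + norm (p - c)) * inner (p - a) n = 0"
      using ca by (simp add: inner_diff_left algebra_simps)
    then show ?thesis
      by (auto simp: orthogonal_def add_nonneg_eq_0_iff)
  qed
qed

lemma dist_orthogonal_offset:
  fixes q p n :: "'a::real_inner"
  assumes "orthogonal n (q - p)"
  shows "(dist (q + n) p)\<^sup>2 = (norm n)\<^sup>2 + (dist q p)\<^sup>2"
proof -
  have "dist (q + n) p = norm (n + (q - p))"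
    by (simp add: dist_norm algebra_simps)
  then show ?thesis
    using norm_add_Pythagorean[OF assms] by (simp add: dist_norm)
qed

lemma dist_orthogonal_offset_ge:
  fixes q p n :: "'a::real_inner"
  assumes "orthogonal n (q - p)"
  shows "norm n \<le> dist (q + n) p" and "dist (q + n) p = norm n \<Longrightarrow> p = q"
proof -
  note sq = dist_orthogonal_offset[OF assms]
  show "norm n \<le> dist (q + n) p"
  proof (rule power2_le_imp_le)
    show "(norm n)\<^sup>2 \<le> (dist (q + n) p)\<^sup>2"
      using sq by (simp only: le_add_same_cancel1 zero_le_power2)
  qed simp
  assume "dist (q + n) p = norm n"
  then have "(dist q p)\<^sup>2 = 0"
    using sq by simp
  then show "p = q"
    by simp
qed

definition rot90 :: "real \<times> real \<Rightarrow> real \<times> real" where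
  "rot90 u = (snd u, - fst u)"

lemma norm_rot90 [simp]: "norm (rot90 u) = norm u"
  by (cases u) (simp add: rot90_def norm_Pair add.commute)

lemma orthogonal_rot90 [simp]: "orthogonal u (rot90 u)"
  by (simp add: rot90_def orthogonal_def inner_prod_def)

lemma concave_subadditive:
  fixes k :: "real \<Rightarrow> real"
  assumes k: "concave_on {0..} k" and k0: "0 \<le> k 0" and a: "0 \<le> a" and b: "0 \<le> b"
  shows "k (a + b) \<le> k a + k b"
proof (cases "a + b = 0")
  case True
  then have "a = 0" "b = 0"
    using a b by simp_all
  then show ?thesis
    using k0 by simp
next
  case False
  then have ab: "0 < a + b"
    using a b by simp
  \<comment> \<open>concavity on the segment from \<open>0\<close> to \<open>a + b\<close>, evaluated at \<open>a\<close> and at \<open>b\<close>\<close>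
  have "u * k (a + b) \<le> k (u * (a + b))" if "0 \<le> u" "u \<le> 1" for u
  proof -
    have "(1 - u) * k 0 + u * k (a + b) \<le> k (u * (a + b))"
      using concave_onD[OF k that, of 0 "a + b"] ab by simp
    moreover have "0 \<le> (1 - u) * k 0"
      using that k0 by simp
    ultimately show ?thesis
      by linarith
  qed
  from this[of "a / (a + b)"] this[of "b / (a + b)"]
  have "a / (a + b) * k (a + b) \<le> k a" "b / (a + b) * k (a + b) \<le> k b"
    using a b ab by simp_all
  moreover have "a / (a + b) * k (a + b) + b / (a + b) * k (a + b) = (a + b) / (a + b) * k (a + b)"
    by (metis add_divide_distrib distrib_right)
  then have "a / (a + b) * k (a + b) + b / (a + b) * k (a + b) = k (a + b)"
    using ab by simp
  ultimately show ?thesis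
    by linarith
qed

section \<open>The metric of \<open>X_A\<close>\<close>

abbreviation lcp_len :: "'a list \<Rightarrow> 'a list \<Rightarrow> nat" where
  "lcp_len L1 L2 \<equiv> length (lcp L1 L2)"

lemma lcp_eq_take: "lcp L1 L2 = take (lcp_len L1 L2) L1 \<and> lcp L1 L2 = take (lcp_len L1 L2) L2"
  by (induction L1 L2 rule: lcp.induct) auto

lemma lcp_len_le: "lcp_len L1 L2 \<le> length L1" "lcp_len L1 L2 \<le> length L2"
  by (induction L1 L2 rule: lcp.induct) auto

lemma nth_eq_below_lcp_len: "k < lcp_len L1 L2 \<Longrightarrow> L1 ! k = L2 ! k"
  by (metis lcp_eq_take nth_take)

lemma nth_neq_at_lcp_len:
  "lcp_len L1 L2 < length L1 \<Longrightarrow> lcp_len L1 L2 < length L2 \<Longrightarrow> L1 ! lcp_len L1 L2 \<noteq> L2 ! lcp_len L1 L2"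
  by (induction L1 L2 rule: lcp.induct) auto

lemma lcp_self [simp]: "lcp L L = L"
  by (induction L) auto

lemma lcp_commute: "lcp L1 L2 = lcp L2 L1"
  by (induction L1 L2 rule: lcp.induct) auto

lemma lcp_len_ge:
  "take k L1 = take k L2 \<Longrightarrow> k \<le> length L1 \<Longrightarrow> k \<le> length L2 \<Longrightarrow> k \<le> lcp_len L1 L2"
proof (induction L1 L2 arbitrary: k rule: lcp.induct)
  case (1 x xs y ys)
  then show ?case by (cases k) auto
qed auto

lemma lcp_len_eq_length_iff: "lcp_len L1 L2 = length L1 \<longleftrightarrow> take (length L1) L2 = L1"
  by (induction L1 L2 rule: lcp.induct) auto

lemma lcp_len_eq_lengths: "lcp_len L1 L2 = length L1 \<Longrightarrow> lcp_len L1 L2 = length L2 \<Longrightarrow> L1 = L2"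
  by (metis lcp_eq_take order_refl take_all)

lemma lcp_len_ultrametric: "min (lcp_len L1 L2) (lcp_len L2 L3) \<le> lcp_len L1 L3"
proof -
  let ?k = "min (lcp_len L1 L2) (lcp_len L2 L3)"
  have "take ?k L1 = take ?k L2" "take ?k L2 = take ?k L3"
    by (metis lcp_eq_take min.commute take_take)+
  moreover have "?k \<le> length L1" "?k \<le> length L3"
    using lcp_len_le[of L1 L2] lcp_len_le[of L2 L3] by auto
  ultimately show ?thesis
    by (intro lcp_len_ge) simp_all
qed

text \<open>Membership in \<open>XA\<close> without reducedness of the address, which the metric does not need.\<close>

fun wf_pt :: "xa_pt \<Rightarrow> bool" where
  "wf_pt (XPt L p) \<longleftrightarrow> (\<forall>s. p = Inr s \<longrightarrow> L \<noteq> [] \<and> 0 < s \<and> s < 1)"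

lemma wf_pt_if_XA: "z \<in> XA \<Longrightarrow> wf_pt z"
  by (auto simp: XA_def)

text \<open>For \<open>k \<le> length L\<close>, the nearest point of \<open>XPt L p\<close> in the ancestor flat \<open>take k L\<close> has
  coordinates \<open>foot L p k\<close> and lies at distance \<open>height L p k\<close>; an edge point counts as
  lying above the origin of the flat \<open>L\<close> the edge leads into.\<close>

definition foot :: "step list \<Rightarrow> (real \<times> real) + real \<Rightarrow> nat \<Rightarrow> real \<times> real" where
  "foot L p k = (if k < length L then lat (gate L k) else (case p of Inl v \<Rightarrow> v | Inr s \<Rightarrow> 0))"

definition height :: "step list \<Rightarrow> (real \<times> real) + real \<Rightarrow> nat \<Rightarrow> real" where
  "height L p k = (if k < length L then up L p k else (case p of Inl v \<Rightarrow> 0 | Inr s \<Rightarrow> s))"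

text \<open>Two points on the same open edge are the only pair whose distance is not measured
  through a flat.\<close>

abbreviation same_edge :: "step list \<Rightarrow> (real \<times> real) + real \<Rightarrow> step list \<Rightarrow> (real \<times> real) + real \<Rightarrow> bool" where
  "same_edge L1 p1 L2 p2 \<equiv> L1 = L2 \<and> \<not> isl p1 \<and> \<not> isl p2"

lemma dXA_eq_foot_height:
  "dXA (XPt L1 p1) (XPt L2 p2) =
    (if same_edge L1 p1 L2 p2 then pdist p1 p2
     else height L1 p1 (lcp_len L1 L2) + dist (foot L1 p1 (lcp_len L1 L2)) (foot L2 p2 (lcp_len L1 L2))
          + height L2 p2 (lcp_len L1 L2))"
proof -
  define n where "n = lcp_len L1 L2"
  have le: "n \<le> length L1" "n \<le> length L2"
    unfolding n_def by (rule lcp_len_le)+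
  have d: "dXA (XPt L1 p1) (XPt L2 p2) =
      (if L1 = L2 then pdist p1 p2
      else if length L1 = n then wdist p1 (gate L2 n) + up L2 p2 n
      else if length L2 = n then up L1 p1 n + wdist p2 (gate L1 n)
      else up L1 p1 n + dist (lat (gate L1 n)) (lat (gate L2 n)) + up L2 p2 n)"
    unfolding n_def by (simp add: Let_def)
  consider "L1 = L2" | "L1 \<noteq> L2" "length L1 = n" | "L1 \<noteq> L2" "length L2 = n"
    | "length L1 \<noteq> n" "length L2 \<noteq> n"
    by blast
  then show ?thesis
  proof cases
    case 1
    then have "n = length L1"
      unfolding n_def by simp
    with 1 d show ?thesis
      by (cases p1; cases p2) (simp_all add: foot_def height_def n_def[symmetric] dist_norm)
  next
    case 2
    then have "n < length L2"
      using le by (metis lcp_len_eq_length_iff n_def nat_less_le take_all)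
    with 2 d show ?thesis
      by (cases p1) (simp_all add: foot_def height_def n_def[symmetric] dist_norm)
  next
    case 3
    then have "n < length L1"
      using le by (metis lcp_commute lcp_len_eq_length_iff n_def nat_less_le take_all)
    with 3 d show ?thesis
      by (cases p2) (simp_all add: foot_def height_def n_def[symmetric] dist_norm norm_minus_commute)
  next
    case 4
    then have "L1 \<noteq> L2"
      unfolding n_def by auto
    with 4 le d show ?thesis
      by (auto simp: foot_def height_def n_def[symmetric])
  qed
qed

declare dXA.simps [simp del]

lemma lenpos_pos: "wf_pt (XPt L p) \<Longrightarrow> 0 < lenpos p"
  by (cases p) (auto simp: add_nonneg_pos)

lemma up_ge_lenpos: "lenpos p \<le> up L p k"
proof -
  have "0 \<le> (\<Sum>r\<leftarrow>xs. norm (lat (fst r)) + (1::real))" for xs :: "step list"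
    by (induction xs) auto
  then show ?thesis
    unfolding up_def by simp
qed

lemma up_pos: "wf_pt (XPt L p) \<Longrightarrow> 0 < up L p k"
  using up_ge_lenpos[of p L k] lenpos_pos[of L p] by linarith

lemma height_last: "Suc k = length L \<Longrightarrow> height L p k = lenpos p"
proof -
  assume "Suc k = length L"
  then have "drop k L = [L ! k]"
    by (metis Cons_nth_drop_Suc drop_all lessI order_refl)
  with \<open>Suc k = length L\<close> show ?thesis
    by (simp add: height_def up_def)
qed

lemma height_Suc:
  assumes "Suc k \<le> length L" and "Suc k < length L \<or> isl p"
  shows "height L p k = height L p (Suc k) + norm (foot L p (Suc k)) + 1"
proof (cases "Suc k < length L")
  case True
  have "drop k L = L ! k # drop (Suc k) L" "drop (Suc k) L = L ! Suc k # drop (Suc (Suc k)) L"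
    using True by (simp_all add: Cons_nth_drop_Suc)
  then have "up L p k = up L p (Suc k) + norm (lat (gate L (Suc k))) + 1"
    by (simp add: up_def gate_def)
  then show ?thesis
    using True by (simp add: height_def foot_def)
next
  case False
  then have "Suc k = length L" "isl p"
    using assms by auto
  then show ?thesis
    using height_last[of k L p] by (cases p) (simp_all add: height_def foot_def)
qed

lemma height_Suc_edge:
  "Suc k = length L \<Longrightarrow> p = Inr s \<Longrightarrow>
    height L p k = 1 - s \<and> height L p (Suc k) = s \<and> foot L p (Suc k) = 0"
  using height_last[of k L p] by (simp add: height_def foot_def)

lemma height_nonneg: "wf_pt (XPt L p) \<Longrightarrow> 0 \<le> height L p k"
  using up_pos[of L p k] by (cases p) (auto simp: height_def less_imp_le)

lemma height_pos: "wf_pt (XPt L p) \<Longrightarrow> k < length L \<Longrightarrow> 0 < height L p k"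
  using up_pos by (auto simp: height_def)

lemma height_Suc_le:
  assumes "wf_pt (XPt L p)" and "Suc k \<le> length L"
  shows "height L p k \<le> height L p (Suc k) + norm (foot L p (Suc k)) + 1"
proof (cases "Suc k = length L \<and> \<not> isl p")
  case True
  then obtain s where "p = Inr s" "Suc k = length L"
    by (cases p) auto
  with assms(1) show ?thesis
    using height_Suc_edge[of k L p s] by auto
qed (use assms height_Suc in force)

lemma height_Suc_ge:
  assumes "wf_pt (XPt L p)" and "Suc k \<le> length L"
  shows "height L p (Suc k) + norm (foot L p (Suc k)) + 1 \<le>
    height L p k + (if Suc k = length L \<and> \<not> isl p then 2 else 0)"
proof (cases "Suc k = length L \<and> \<not> isl p")
  case True
  then obtain s where "p = Inr s" "Suc k = length L"
    by (cases p) auto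
  with assms(1) show ?thesis
    using height_Suc_edge[of k L p s] by auto
qed (use assms height_Suc in force)

lemma pdist_commute: "pdist p q = pdist q p"
  by (cases p; cases q) (auto simp: dist_commute)

lemma dXA_commute: "dXA z w = dXA w z"
  by (cases z; cases w) (auto simp: dXA_eq_foot_height lcp_commute dist_commute pdist_commute)

lemma dXA_self [simp]: "dXA z z = 0"
  by (cases z) (auto simp: dXA_eq_foot_height foot_def height_def split: sum.splits)

lemma dXA_nonneg: "wf_pt z \<Longrightarrow> wf_pt w \<Longrightarrow> 0 \<le> dXA z w"
proof (cases z; cases w)
  fix L1 p1 L2 p2
  assume "z = XPt L1 p1" "w = XPt L2 p2" "wf_pt z" "wf_pt w"
  then show ?thesis
    using height_nonneg[of L1 p1] height_nonneg[of L2 p2]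
    by (cases p1; cases p2) (auto simp: dXA_eq_foot_height intro!: add_nonneg_nonneg)
qed

lemma dXA_eq_0_iff:
  assumes "wf_pt z" and "wf_pt w"
  shows "dXA z w = 0 \<longleftrightarrow> z = w"
proof
  obtain L1 p1 L2 p2 where z: "z = XPt L1 p1" and w: "w = XPt L2 p2"
    by (cases z; cases w)
  have wf: "wf_pt (XPt L1 p1)" "wf_pt (XPt L2 p2)"
    using assms z w by auto
  assume d0: "dXA z w = 0"
  show "z = w"
  proof (cases "same_edge L1 p1 L2 p2")
    case True
    with d0 show ?thesis
      unfolding z w dXA_eq_foot_height by (cases p1; cases p2) auto
  next
    case False
    let ?n = "lcp_len L1 L2"
    have "height L1 p1 ?n + dist (foot L1 p1 ?n) (foot L2 p2 ?n) + height L2 p2 ?n = 0"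
      using d0 False unfolding z w dXA_eq_foot_height by simp
    then have h1: "height L1 p1 ?n = 0" and h2: "height L2 p2 ?n = 0"
      and df: "foot L1 p1 ?n = foot L2 p2 ?n"
      using height_nonneg[OF wf(1), of ?n] height_nonneg[OF wf(2), of ?n]
        zero_le_dist[of "foot L1 p1 ?n" "foot L2 p2 ?n"]
      by (smt (verit) zero_less_dist_iff)+
    have n1: "?n = length L1" and n2: "?n = length L2"
      using h1 h2 height_pos[OF wf(1)] height_pos[OF wf(2)] lcp_len_le[of L1 L2]
      by (metis le_neq_implies_less less_irrefl)+
    then have "L1 = L2"
      by (rule lcp_len_eq_lengths)
    moreover have "p1 = p2"
      using h1 h2 df wf n1 n2 by (cases p1; cases p2) (auto simp: height_def foot_def)
    ultimately show ?thesis
      using z w by simp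
  qed
qed simp

lemma dXA_pos: "wf_pt z \<Longrightarrow> wf_pt w \<Longrightarrow> z \<noteq> w \<Longrightarrow> 0 < dXA z w"
  using dXA_nonneg dXA_eq_0_iff by fastforce

definition route_len ::
    "step list \<Rightarrow> (real \<times> real) + real \<Rightarrow> step list \<Rightarrow> (real \<times> real) + real \<Rightarrow> nat \<Rightarrow> real" where
  "route_len L1 p1 L2 p2 k = height L1 p1 k + dist (foot L1 p1 k) (foot L2 p2 k) + height L2 p2 k"

lemma dXA_eq_route_len:
  "\<not> same_edge L1 p1 L2 p2 \<Longrightarrow>
    dXA (XPt L1 p1) (XPt L2 p2) = route_len L1 p1 L2 p2 (lcp_len L1 L2)"
  by (auto simp: dXA_eq_foot_height route_len_def)

lemma foot_eq_below_lcp_len: "k < lcp_len L1 L2 \<Longrightarrow> foot L1 p1 k = foot L2 p2 k"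
  using lcp_len_le[of L1 L2] nth_eq_below_lcp_len[of k L1 L2] by (simp add: foot_def gate_def)

lemma route_len_Suc_le:
  assumes wf1: "wf_pt (XPt L1 p1)" and wf2: "wf_pt (XPt L2 p2)"
    and k: "k < lcp_len L1 L2" and ns: "\<not> same_edge L1 p1 L2 p2"
  shows "route_len L1 p1 L2 p2 (Suc k) \<le> route_len L1 p1 L2 p2 k"
proof -
  have le: "Suc k \<le> length L1" "Suc k \<le> length L2"
    using k lcp_len_le[of L1 L2] by auto
  \<comment> \<open>otherwise both points lie on the edge entering the flat at depth \<open>Suc k\<close>\<close>
  have "\<not> (Suc k = length L1 \<and> \<not> isl p1 \<and> Suc k = length L2 \<and> \<not> isl p2)"
    using ns k lcp_len_le[of L1 L2] lcp_len_eq_lengths[of L1 L2] by auto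
  moreover have "dist (foot L1 p1 (Suc k)) (foot L2 p2 (Suc k))
      \<le> norm (foot L1 p1 (Suc k)) + norm (foot L2 p2 (Suc k))"
    by (simp add: dist_norm norm_triangle_ineq4)
  ultimately show ?thesis
    using height_Suc_ge[OF wf1 le(1)] height_Suc_ge[OF wf2 le(2)] foot_eq_below_lcp_len[OF k, of p1 p2]
    unfolding route_len_def by (simp split: if_splits)
qed

lemma route_len_lcp_len_le:
  assumes wf1: "wf_pt (XPt L1 p1)" and wf2: "wf_pt (XPt L2 p2)"
    and ns: "\<not> same_edge L1 p1 L2 p2" and k: "k \<le> lcp_len L1 L2"
  shows "route_len L1 p1 L2 p2 (lcp_len L1 L2) \<le> route_len L1 p1 L2 p2 k"
  using k
proof (induction k rule: inc_induct)
  case (step m)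
  then show ?case
    using route_len_Suc_le[OF wf1 wf2 step.hyps(2) ns] by linarith
qed simp

lemma dXA_le_route_len:
  assumes wf1: "wf_pt (XPt L1 p1)" and wf2: "wf_pt (XPt L2 p2)" and k: "k \<le> lcp_len L1 L2"
  shows "dXA (XPt L1 p1) (XPt L2 p2) \<le> route_len L1 p1 L2 p2 k"
proof (cases "same_edge L1 p1 L2 p2")
  case True
  then obtain s1 s2 where s: "L1 = L2" "p1 = Inr s1" "p2 = Inr s2"
    by (cases p1; cases p2) auto
  then have r: "0 < s1" "s1 < 1" "0 < s2" "s2 < 1"
    using wf1 wf2 by auto
  show ?thesis
  proof (cases "k < length L1")
    case True
    have "\<bar>s1 - s2\<bar> \<le> (1 - s1) + (1 - s2)"
      using r by (simp add: abs_le_iff)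
    moreover have "route_len L1 p1 L2 p2 k = up L1 p1 k + dist (foot L1 p1 k) (foot L2 p2 k) + up L1 p2 k"
      using True s by (simp add: route_len_def height_def)
    moreover have "dXA (XPt L1 p1) (XPt L2 p2) = \<bar>s1 - s2\<bar>"
      using s by (simp add: dXA_eq_foot_height)
    moreover have "1 - s1 \<le> up L1 p1 k" "1 - s2 \<le> up L1 p2 k"
      using up_ge_lenpos[of p1 L1 k] up_ge_lenpos[of p2 L1 k] s by simp_all
    ultimately show ?thesis
      using zero_le_dist[of "foot L1 p1 k" "foot L2 p2 k"] by linarith
  next
    case False
    then show ?thesis
      using s r k by (simp add: dXA_eq_foot_height route_len_def height_def foot_def)
  qed
next
  case False
  then show ?thesis
    using dXA_eq_route_len route_len_lcp_len_le[OF wf1 wf2 False k] by simp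
qed

lemma height_diff_below_lcp_len:
  assumes "k \<le> m" and m: "m < lcp_len L2 L3"
  shows "height L3 p3 k - height L2 p2 k = height L3 p3 m - height L2 p2 m"
  using assms(1)
proof (induction k rule: inc_induct)
  case (step n)
  then have "Suc n < length L2" "Suc n < length L3" "Suc n < lcp_len L2 L3"
    using m lcp_len_le[of L2 L3] by auto
  then show ?case
    using step.IH height_Suc[of n L2 p2] height_Suc[of n L3 p3] foot_eq_below_lcp_len[of "Suc n" L2 L3 p2 p3]
    by simp
qed simp

lemma height_below_lcp_len_le:
  assumes wf2: "wf_pt (XPt L2 p2)" and wf3: "wf_pt (XPt L3 p3)" and m: "Suc m = lcp_len L2 L3"
  shows "height L3 p3 m \<le> height L2 p2 m + dXA (XPt L2 p2) (XPt L3 p3)"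
proof -
  let ?n = "lcp_len L2 L3"
  have l2: "Suc m \<le> length L2" and l3: "Suc m \<le> length L3"
    using m lcp_len_le[of L2 L3] by auto
  have h3: "height L3 p3 m \<le> height L3 p3 ?n + norm (foot L3 p3 ?n) + 1"
    using height_Suc_le[OF wf3 l3] m by simp
  show ?thesis
  proof (cases "Suc m = length L2 \<and> \<not> isl p2")
    case True
    then obtain s where s: "p2 = Inr s" "Suc m = length L2"
      by (cases p2) auto
    note e2 = height_Suc_edge[OF s(2) s(1)]
    show ?thesis
    proof (cases "L2 = L3 \<and> \<not> isl p3")
      case True
      then obtain t where t: "L2 = L3" "p3 = Inr t"
        by (cases p3) auto
      then show ?thesis
        using e2 s height_Suc_edge[of m L3 p3 t] by (simp add: dXA_eq_foot_height)
    next
      case False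
      then have "dXA (XPt L2 p2) (XPt L3 p3) = s + norm (foot L3 p3 ?n) + height L3 p3 ?n"
        using dXA_eq_route_len[of L2 L3 p2 p3] e2 m s by (simp add: route_len_def)
      then show ?thesis
        using e2 h3 m by simp
    qed
  next
    case False
    then have "Suc m < length L2 \<or> isl p2"
      using l2 by auto
    then have e2: "height L2 p2 m = height L2 p2 ?n + norm (foot L2 p2 ?n) + 1"
      using height_Suc[OF l2] m by simp
    have "\<not> same_edge L2 p2 L3 p3"
      using False m by auto
    then have "dXA (XPt L2 p2) (XPt L3 p3) =
        height L2 p2 ?n + dist (foot L2 p2 ?n) (foot L3 p3 ?n) + height L3 p3 ?n"
      by (simp add: dXA_eq_route_len route_len_def)
    moreover have "norm (foot L3 p3 ?n) \<le> norm (foot L2 p2 ?n) + dist (foot L2 p2 ?n) (foot L3 p3 ?n)"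
      by (metis dist_commute dist_norm norm_triangle_sub)
    ultimately show ?thesis
      using e2 h3 height_nonneg[OF wf2, of ?n] by linarith
  qed
qed

lemma height_foot_le_dXA:
  assumes wf2: "wf_pt (XPt L2 p2)" and wf3: "wf_pt (XPt L3 p3)" and k: "k \<le> lcp_len L2 L3"
  shows "height L3 p3 k + dist (foot L2 p2 k) (foot L3 p3 k) \<le> height L2 p2 k + dXA (XPt L2 p2) (XPt L3 p3)"
proof (cases "k = lcp_len L2 L3")
  case True
  show ?thesis
  proof (cases "same_edge L2 p2 L3 p3")
    case same: True
    then have "k = length L2"
      using True by simp
    then show ?thesis
      using same by (cases p2; cases p3) (auto simp: height_def foot_def dXA_eq_foot_height)
  next
    case False
    then show ?thesis
      using True dXA_eq_route_len height_nonneg[OF wf2, of k] by (simp add: route_len_def)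
  qed
next
  case False
  then have "k < lcp_len L2 L3"
    using k by simp
  moreover define m where "m = lcp_len L2 L3 - 1"
  ultimately have "k \<le> m" "Suc m = lcp_len L2 L3"
    by auto
  then show ?thesis
    using height_diff_below_lcp_len[of k m L2 L3 p3 p2] height_below_lcp_len_le[OF wf2 wf3, of m]
      foot_eq_below_lcp_len[OF \<open>k < lcp_len L2 L3\<close>, of p2 p3]
    by simp
qed

lemma dXA_edge_shift:
  "dXA (XPt L (Inr s1)) z \<le> \<bar>s1 - s2\<bar> + dXA (XPt L (Inr s2)) z"
proof (cases z)
  case (XPt L3 p3)
  show ?thesis
  proof (cases "L3 = L \<and> \<not> isl p3")
    case True
    then show ?thesis
      using XPt by (cases p3) (auto simp: dXA_eq_foot_height)
  next
    case False
    then show ?thesis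
      using XPt dXA_eq_route_len[of L L3 "Inr s1" p3] dXA_eq_route_len[of L L3 "Inr s2" p3]
      by (auto simp: route_len_def height_def foot_def up_def)
  qed
qed

lemma dXA_triangle_off_edges:
  assumes wf: "wf_pt (XPt L1 p1)" "wf_pt (XPt L2 p2)" "wf_pt (XPt L3 p3)"
    and ns12: "\<not> same_edge L1 p1 L2 p2" and ns23: "\<not> same_edge L2 p2 L3 p3"
  shows "dXA (XPt L1 p1) (XPt L3 p3) \<le> dXA (XPt L1 p1) (XPt L2 p2) + dXA (XPt L2 p2) (XPt L3 p3)"
    (is "dXA ?z1 ?z3 \<le> dXA ?z1 ?z2 + dXA ?z2 ?z3")
proof -
  have d12: "dXA ?z1 ?z2 = route_len L1 p1 L2 p2 (lcp_len L1 L2)"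
    using dXA_eq_route_len[OF ns12] .
  have d23: "dXA ?z2 ?z3 = route_len L2 p2 L3 p3 (lcp_len L2 L3)"
    using dXA_eq_route_len[OF ns23] .
  \<comment> \<open>route through the shallower of the two common ancestor flats\<close>
  show ?thesis
  proof (cases "lcp_len L1 L2 \<le> lcp_len L2 L3")
    case True
    let ?k = "lcp_len L1 L2"
    have "dXA ?z1 ?z3 \<le> route_len L1 p1 L3 p3 ?k"
      using dXA_le_route_len[OF wf(1,3)] lcp_len_ultrametric[of L1 L2 L3] True by simp
    moreover have "height L3 p3 ?k + dist (foot L2 p2 ?k) (foot L3 p3 ?k) \<le> height L2 p2 ?k + dXA ?z2 ?z3"
      using height_foot_le_dXA[OF wf(2,3) True] .
    ultimately show ?thesis
      using d12 dist_triangle[of "foot L1 p1 ?k" "foot L3 p3 ?k" "foot L2 p2 ?k"]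
      unfolding route_len_def by linarith
  next
    case False
    let ?k = "lcp_len L2 L3"
    have "dXA ?z1 ?z3 \<le> route_len L1 p1 L3 p3 ?k"
      using dXA_le_route_len[OF wf(1,3)] lcp_len_ultrametric[of L1 L2 L3] False by simp
    moreover have "height L1 p1 ?k + dist (foot L2 p2 ?k) (foot L1 p1 ?k) \<le> height L2 p2 ?k + dXA ?z2 ?z1"
      using height_foot_le_dXA[OF wf(2,1)] False lcp_commute[of L1 L2] by simp
    ultimately show ?thesis
      using d23 dist_triangle[of "foot L1 p1 ?k" "foot L3 p3 ?k" "foot L2 p2 ?k"]
        dXA_commute[of ?z1 ?z2] dist_commute[of "foot L2 p2 ?k" "foot L1 p1 ?k"]
      unfolding route_len_def by linarith
  qed
qed

theorem dXA_triangle: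
  assumes "wf_pt z1" "wf_pt z2" "wf_pt z3"
  shows "dXA z1 z3 \<le> dXA z1 z2 + dXA z2 z3"
proof -
  obtain L1 p1 L2 p2 L3 p3 where z: "z1 = XPt L1 p1" "z2 = XPt L2 p2" "z3 = XPt L3 p3"
    by (cases z1; cases z2; cases z3)
  show ?thesis
  proof (cases "same_edge L1 p1 L2 p2")
    case True
    then obtain s1 s2 where "L1 = L2" "p1 = Inr s1" "p2 = Inr s2"
      by (cases p1; cases p2) auto
    then show ?thesis
      using z dXA_edge_shift[of L1 s1 z3 s2] by (simp add: dXA_eq_foot_height)
  next
    case ns12: False
    show ?thesis
    proof (cases "same_edge L2 p2 L3 p3")
      case True
      then obtain s2 s3 where "L2 = L3" "p2 = Inr s2" "p3 = Inr s3"
        by (cases p2; cases p3) auto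
      then have "dXA z3 z1 \<le> dXA z2 z3 + dXA z2 z1"
        using z dXA_edge_shift[of L2 s3 z1 s2] by (simp add: dXA_eq_foot_height abs_minus_commute)
      then show ?thesis
        using dXA_commute[of z1 z3] dXA_commute[of z1 z2] by linarith
    next
      case False
      then show ?thesis
        using dXA_triangle_off_edges ns12 assms z by simp
    qed
  qed
qed

section \<open>Flats, gates and projections\<close>

text \<open>\<open>flat_proj L z\<close> is the nearest point of the flat \<open>L\<close> to \<open>z\<close> and \<open>flat_height L z\<close> its distance
  (\<open>dXA_flat_pt\<close>); outside the subtree of \<open>L\<close> that nearest point is the origin of \<open>L\<close>.\<close>

fun flat_proj :: "step list \<Rightarrow> xa_pt \<Rightarrow> real \<times> real" where
  "flat_proj L (XPt L' p') = (if lcp_len L L' = length L then foot L' p' (length L) else 0)"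

fun flat_height :: "step list \<Rightarrow> xa_pt \<Rightarrow> real" where
  "flat_height L (XPt L' p') =
    (if lcp_len L L' = length L then height L' p' (length L) else dXA (XPt L (Inl 0)) (XPt L' p'))"

text \<open>The branch at the flat \<open>L\<close> containing a point: \<open>Some (Some r)\<close> if it lies beyond the edge
  leaving \<open>L\<close> by the step \<open>r\<close>, \<open>Some None\<close> if it lies on \<open>L\<close>, and \<open>None\<close> otherwise.\<close>

fun flat_branch :: "step list \<Rightarrow> xa_pt \<Rightarrow> step option option" where
  "flat_branch L (XPt L' p') =
    (if lcp_len L L' = length L \<and> length L < length L' then Some (Some (L' ! length L))
     else if lcp_len L L' = length L \<and> isl p' then Some None else None)"

lemma flat_pt_simps [simp]:
  "flat_proj L (XPt L (Inl v)) = v" "flat_height L (XPt L (Inl v)) = 0"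
  "flat_branch L (XPt L (Inl v)) = Some None"
  by (auto simp: foot_def height_def)

lemma height_through_descendant:
  assumes m: "m \<le> length L1" and L: "take m L1 = L" and ne: "m < length L1 \<or> isl p1" and k: "k < m"
  shows "height L1 p1 k = height L1 p1 m + norm (foot L1 p1 m) + height L (Inl 0) k"
proof -
  have lm: "length L = m"
    using L m by auto
  obtain j where j: "Suc j = m"
    using k by (cases m) auto
  have "k \<le> j"
    using k j by simp
  then show ?thesis
  proof (induction k rule: inc_induct)
    case base
    have "height L1 p1 j = height L1 p1 m + norm (foot L1 p1 m) + 1"
      using height_Suc[of j L1 p1] j m ne by simp
    moreover have "height L (Inl 0) j = 1"
      using height_last[of j L "Inl 0"] j lm by simp
    ultimately show ?case
      by simp
  next
    case (step n)
    have "L ! Suc n = L1 ! Suc n"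
      using L step.hyps(2) j by auto
    then have "foot L1 p1 (Suc n) = foot L (Inl 0) (Suc n)"
      using step.hyps(2) j lm m by (auto simp: foot_def gate_def)
    then show ?case
      using step.IH height_Suc[of n L1 p1] height_Suc[of n L "Inl 0"] step.hyps(2) j lm m by simp
  qed
qed

lemma lcp_len_beyond:
  assumes A: "lcp_len L A = length L" and B: "lcp_len L B < length L"
  shows "lcp_len A B = lcp_len L B"
proof -
  let ?n = "lcp_len L B"
  have tA: "take (length L) A = L" and mA: "length L \<le> length A"
    using A lcp_len_eq_length_iff lcp_len_le[of L A] by auto
  have "take ?n A = take ?n B"
    using tA B lcp_eq_take[of L B] by (metis min.absorb1 less_imp_le take_take)
  then have ge: "?n \<le> lcp_len A B"
    using B mA lcp_len_le[of L B] by (intro lcp_len_ge) simp_all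
  have "\<not> ?n < lcp_len A B"
  proof
    assume lt: "?n < lcp_len A B"
    then have "A ! ?n = B ! ?n" "?n < length B"
      using nth_eq_below_lcp_len lcp_len_le[of A B] by auto
    moreover have "A ! ?n = L ! ?n"
      using tA B by (metis nth_take)
    ultimately show False
      using nth_neq_at_lcp_len[of L B] B by simp
  qed
  with ge show ?thesis
    by simp
qed

lemma dXA_via_flat_outside:
  assumes A: "lcp_len L A = length L" and B: "lcp_len L B \<noteq> length L"
    and na: "\<not> (A = L \<and> \<not> isl pa)"
  shows "dXA (XPt A pa) (XPt B pb) =
    flat_height L (XPt A pa) + dist (flat_proj L (XPt A pa)) (flat_proj L (XPt B pb)) + flat_height L (XPt B pb)"
proof -
  let ?m = "length L" and ?n = "lcp_len L B"
  have nlt: "?n < ?m"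
    using B lcp_len_le[of L B] by simp
  have tA: "take ?m A = L" and mA: "?m \<le> length A"
    using A lcp_len_eq_length_iff lcp_len_le[of L A] by auto
  have nAB: "lcp_len A B = ?n"
    using lcp_len_beyond[OF A nlt] .
  have "\<not> same_edge A pa B pb" "\<not> same_edge L (Inl 0) B pb"
    using nAB nlt mA by auto
  then have d: "dXA (XPt A pa) (XPt B pb) = route_len A pa B pb ?n"
    "dXA (XPt L (Inl 0)) (XPt B pb) = route_len L (Inl 0) B pb ?n"
    using dXA_eq_route_len nAB by simp_all
  have "?m < length A \<or> isl pa"
    using na tA mA by (metis le_neq_implies_less take_all)
  then have "height A pa ?n = height A pa ?m + norm (foot A pa ?m) + height L (Inl 0) ?n"
    using height_through_descendant[OF mA tA _ nlt] by simp
  moreover have "A ! ?n = L ! ?n"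
    using tA nlt by (metis nth_take)
  then have "foot A pa ?n = foot L (Inl 0) ?n"
    using nlt mA by (auto simp: foot_def gate_def)
  ultimately show ?thesis
    using d A B unfolding route_len_def by (simp add: dist_0_norm)
qed

lemma dXA_via_flat_inside:
  assumes 1: "lcp_len L L1 = length L" and 2: "lcp_len L L2 = length L"
    and b: "flat_branch L (XPt L1 p1) \<noteq> flat_branch L (XPt L2 p2) \<or>
      flat_branch L (XPt L1 p1) = Some None \<or> flat_branch L (XPt L2 p2) = Some None"
  shows "dXA (XPt L1 p1) (XPt L2 p2) = flat_height L (XPt L1 p1)
    + dist (flat_proj L (XPt L1 p1)) (flat_proj L (XPt L2 p2)) + flat_height L (XPt L2 p2)"
proof -
  let ?m = "length L"
  have t: "take ?m L1 = L" "take ?m L2 = L" and m: "?m \<le> length L1" "?m \<le> length L2"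
    using 1 2 lcp_len_eq_length_iff lcp_len_le[of L L1] lcp_len_le[of L L2] by auto
  have "\<not> ?m < lcp_len L1 L2"
  proof
    assume lt: "?m < lcp_len L1 L2"
    then have "L1 ! ?m = L2 ! ?m" "?m < length L1" "?m < length L2"
      using nth_eq_below_lcp_len lcp_len_le[of L1 L2] by auto
    then show False
      using b 1 2 by auto
  qed
  moreover have "?m \<le> lcp_len L1 L2"
    using t m by (intro lcp_len_ge) simp_all
  ultimately have n: "lcp_len L1 L2 = ?m"
    by simp
  have "\<not> same_edge L1 p1 L2 p2"
    using b 1 2 by (auto split: if_splits)
  then show ?thesis
    using dXA_eq_route_len n 1 2 unfolding route_len_def by simp
qed

theorem dXA_via_flat:
  assumes b: "flat_branch L z \<noteq> flat_branch L w \<or> flat_branch L z = Some None \<or> flat_branch L w = Some None"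
  shows "dXA z w = flat_height L z + dist (flat_proj L z) (flat_proj L w) + flat_height L w"
proof -
  obtain L1 p1 L2 p2 where z: "z = XPt L1 p1" and w: "w = XPt L2 p2"
    by (cases z; cases w)
  consider "lcp_len L L1 = length L" "lcp_len L L2 = length L"
    | "lcp_len L L1 = length L" "lcp_len L L2 \<noteq> length L"
    | "lcp_len L L1 \<noteq> length L" "lcp_len L L2 = length L"
    | "lcp_len L L1 \<noteq> length L" "lcp_len L L2 \<noteq> length L"
    by blast
  then show ?thesis
  proof cases
    case 1
    then show ?thesis
      using dXA_via_flat_inside b z w by blast
  next
    case 2
    then have "\<not> (L1 = L \<and> \<not> isl p1)"
      using b z w by (auto split: if_splits)
    with 2 show ?thesis
      using dXA_via_flat_outside[of L L1 L2 p1 p2] z w by simp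
  next
    case 3
    then have "\<not> (L2 = L \<and> \<not> isl p2)"
      using b z w by (auto split: if_splits)
    with 3 have "dXA w z = flat_height L w + dist (flat_proj L w) (flat_proj L z) + flat_height L z"
      using dXA_via_flat_outside[of L L2 L1 p2 p1] z w by simp
    then show ?thesis
      using dXA_commute[of z w] dist_commute[of "flat_proj L z" "flat_proj L w"] by linarith
  next
    case 4
    then show ?thesis
      using b z w by auto
  qed
qed

lemma dXA_flat_pt: "dXA (XPt L (Inl v)) w = dist v (flat_proj L w) + flat_height L w"
  using dXA_via_flat[of L "XPt L (Inl v)" w] by (simp add: foot_def height_def)

lemma flat_height_nonneg: "wf_pt w \<Longrightarrow> 0 \<le> flat_height L w"
  using dXA_flat_pt[of L "flat_proj L w" w] dXA_nonneg[of "XPt L (Inl (flat_proj L w))" w] by simp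

lemma flat_height_eq_0: "wf_pt w \<Longrightarrow> flat_height L w = 0 \<Longrightarrow> w = XPt L (Inl (flat_proj L w))"
  using dXA_flat_pt[of L "flat_proj L w" w] dXA_eq_0_iff[of "XPt L (Inl (flat_proj L w))" w] by simp

text \<open>For nonempty \<open>M\<close>, the edge entering the flat \<open>M\<close> joins \<open>entry_gate M\<close> to \<open>flat_origin M\<close>.
  Removing either point disconnects \<open>X_A\<close>; \<open>beyond_gate M\<close> and \<open>beyond_origin M\<close> are the
  respective components containing \<open>M\<close>.\<close>

definition entry_gate :: "step list \<Rightarrow> xa_pt" where
  "entry_gate M = XPt (butlast M) (Inl (lat (fst (last M))))"

definition flat_origin :: "step list \<Rightarrow> xa_pt" where
  "flat_origin M = XPt M (Inl 0)"

fun beyond_gate :: "step list \<Rightarrow> xa_pt \<Rightarrow> bool" where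
  "beyond_gate M (XPt L p) \<longleftrightarrow> take (length M) L = M"

fun beyond_origin :: "step list \<Rightarrow> xa_pt \<Rightarrow> bool" where
  "beyond_origin M (XPt L p) \<longleftrightarrow> take (length M) L = M \<and> \<not> (L = M \<and> \<not> isl p)"

lemma wf_pt_entry_gate [simp]: "wf_pt (entry_gate M)"
  by (simp add: entry_gate_def)

lemma wf_pt_flat_origin [simp]: "wf_pt (flat_origin M)"
  by (simp add: flat_origin_def)

lemma not_beyond_gate_entry_gate: "M \<noteq> [] \<Longrightarrow> \<not> beyond_gate M (entry_gate M)"
proof
  assume "M \<noteq> []" "beyond_gate M (entry_gate M)"
  then have "length (take (length M) (butlast M)) = length M"
    by (simp add: entry_gate_def)
  with \<open>M \<noteq> []\<close> show False
    by (cases "length M") simp_all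
qed

lemma beyond_gate_edge:
  assumes "beyond_gate M z" and "\<not> beyond_origin M z"
  shows "\<exists>th. z = XPt M (Inr th)"
proof (cases z)
  case (XPt L p)
  with assms show ?thesis
    by (cases p) auto
qed

lemma flat_branch_beyond_gate:
  assumes M: "M \<noteq> []" and z: "beyond_gate M z"
  shows "flat_branch (butlast M) z = Some (Some (last M)) \<and> flat_proj (butlast M) z = lat (fst (last M))"
proof -
  obtain L p where zz: "z = XPt L p"
    by (cases z)
  have t: "take (length M) L = M"
    using z zz by simp
  then have lz: "length M \<le> length L"
    by (metis length_take min.absorb_iff1 min.commute)
  let ?M' = "butlast M"
  have "take (length ?M') L = ?M'"
    using t lz by (metis butlast_take length_butlast)
  then have e: "lcp_len ?M' L = length ?M'"
    using lcp_len_eq_length_iff by blast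
  have jl: "length ?M' < length M"
    using M by simp
  then have lt: "length ?M' < length L"
    using lz by linarith
  have "L ! length ?M' = M ! length ?M'"
    using t jl by (metis nth_take)
  also have "\<dots> = last M"
    using M by (simp add: last_conv_nth)
  finally show ?thesis
    using e lt zz by (simp add: foot_def gate_def)
qed

lemma flat_branch_not_beyond_gate:
  assumes M: "M \<noteq> []" and w: "\<not> beyond_gate M w"
  shows "flat_branch (butlast M) w \<noteq> Some (Some (last M))"
proof
  assume a: "flat_branch (butlast M) w = Some (Some (last M))"
  obtain L p where ww: "w = XPt L p"
    by (cases w)
  let ?M' = "butlast M"
  have e: "lcp_len ?M' L = length ?M'" and lt: "length ?M' < length L" and nth: "L ! length ?M' = last M"
    using a ww by (auto split: if_splits)
  have "take (length ?M') L = ?M'"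
    using lcp_len_eq_length_iff e by blast
  then have "take (Suc (length ?M')) L = M"
    using take_Suc_conv_app_nth[OF lt] nth M by simp
  then show False
    using w ww M by simp
qed

lemma dXA_split_at_entry_gate:
  assumes M: "M \<noteq> []" and z: "beyond_gate M z" and w: "\<not> beyond_gate M w"
  shows "dXA z w = dXA z (entry_gate M) + dXA (entry_gate M) w"
proof -
  let ?M' = "butlast M" and ?g = "lat (fst (last M))"
  have "flat_branch ?M' z = Some (Some (last M))" and pz: "flat_proj ?M' z = ?g"
    using flat_branch_beyond_gate[OF M z] by auto
  moreover have "flat_branch ?M' w \<noteq> Some (Some (last M))"
    using flat_branch_not_beyond_gate[OF M w] .
  ultimately have "dXA z w = flat_height ?M' z + dist (flat_proj ?M' z) (flat_proj ?M' w) + flat_height ?M' w"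
    using dXA_via_flat[of ?M' z w] by simp
  then show ?thesis
    using pz dXA_commute[of z "entry_gate M"] by (simp add: entry_gate_def dXA_flat_pt)
qed

lemma dXA_split_at_flat_origin:
  assumes z: "beyond_origin M z" and w: "\<not> beyond_origin M w"
  shows "dXA z w = dXA z (flat_origin M) + dXA (flat_origin M) w"
proof -
  obtain Lz pz Lw pw where zz: "z = XPt Lz pz" and ww: "w = XPt Lw pw"
    by (cases z; cases w)
  have "flat_branch M z \<noteq> None"
    using z zz lcp_len_eq_length_iff[of M Lz] by (cases "length M < length Lz") auto
  moreover have "flat_branch M w = None"
    using w ww lcp_len_eq_length_iff[of M Lw] by auto
  ultimately have "dXA z w = flat_height M z + dist (flat_proj M z) (flat_proj M w) + flat_height M w"
    using dXA_via_flat[of M z w] by simp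
  moreover have "flat_proj M w = 0"
    using w ww lcp_len_eq_length_iff[of M Lw] by (auto simp: foot_def split: sum.splits)
  moreover have "dXA (flat_origin M) u = dist 0 (flat_proj M u) + flat_height M u" for u
    unfolding flat_origin_def by (rule dXA_flat_pt)
  ultimately show ?thesis
    using dXA_commute[of z "flat_origin M"] dist_commute[of "flat_proj M z" 0] by simp
qed

lemma flat_height_butlast:
  assumes "M \<noteq> []"
  shows "flat_height (butlast M) (XPt M p) = lenpos p"
proof -
  have "lcp_len (butlast M) M = length (butlast M)"
    using lcp_len_eq_length_iff[of "butlast M" M] by (simp add: butlast_conv_take)
  moreover have "Suc (length (butlast M)) = length M"
    using assms by simp
  ultimately show ?thesis
    using height_last[of "length (butlast M)" M p] by simp
qed

lemma dXA_entry_gate_flat_origin: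
  assumes "M \<noteq> []"
  shows "dXA (entry_gate M) (flat_origin M) = 1"
proof -
  have "flat_proj (butlast M) (flat_origin M) = lat (fst (last M))"
    using flat_branch_beyond_gate[OF assms, of "flat_origin M"] by (simp add: flat_origin_def)
  moreover have "flat_height (butlast M) (flat_origin M) = 1"
    using flat_height_butlast[OF assms, of "Inl 0"] by (simp add: flat_origin_def)
  ultimately show ?thesis
    unfolding entry_gate_def dXA_flat_pt by simp
qed

lemma not_beyond_origin_entry_gate: "M \<noteq> [] \<Longrightarrow> \<not> beyond_origin M (entry_gate M)"
  using not_beyond_gate_entry_gate[of M] by (cases "entry_gate M") auto

lemma dXA_entry_gate_beyond_origin:
  assumes "M \<noteq> []" and "beyond_origin M z"
  shows "dXA z (entry_gate M) = dXA z (flat_origin M) + 1"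
  using dXA_split_at_flat_origin[OF assms(2) not_beyond_origin_entry_gate[OF assms(1)]]
    dXA_entry_gate_flat_origin[OF assms(1)] dXA_commute[of "flat_origin M" "entry_gate M"]
  by simp

lemma dXA_entry_gate_edge:
  assumes "M \<noteq> []"
  shows "dXA (entry_gate M) (XPt M (Inr th)) = 1 - th"
proof -
  have "flat_proj (butlast M) (XPt M (Inr th)) = lat (fst (last M))"
    using flat_branch_beyond_gate[OF assms, of "XPt M (Inr th)"] by simp
  then show ?thesis
    unfolding entry_gate_def dXA_flat_pt using flat_height_butlast[OF assms, of "Inr th"] by simp
qed

lemma dXA_flat_origin_edge: "dXA (flat_origin M) (XPt M (Inr th)) = th"
  by (simp add: flat_origin_def dXA.simps)

section \<open>Geodesic rays and their nearest points\<close>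

lemma geodesic_ray_wf: "geodesic_ray b \<Longrightarrow> 0 \<le> t \<Longrightarrow> wf_pt (b t)"
  by (auto simp: geodesic_ray_def intro: wf_pt_if_XA)

lemma geodesic_ray_dist: "geodesic_ray b \<Longrightarrow> 0 \<le> s \<Longrightarrow> 0 \<le> t \<Longrightarrow> dXA (b s) (b t) = \<bar>s - t\<bar>"
  by (auto simp: geodesic_ray_def)

lemma geodesic_ray_base: "geodesic_ray b \<Longrightarrow> b 0 = base_pt"
  by (auto simp: geodesic_ray_def)

lemma geodesic_ray_norm: "geodesic_ray b \<Longrightarrow> 0 \<le> t \<Longrightarrow> dXA base_pt (b t) = t"
  using geodesic_ray_dist[of b 0 t] geodesic_ray_base[of b] by simp

lemma wf_pt_base_pt [simp]: "wf_pt base_pt"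
  by (simp add: base_pt_def)

lemma not_beyond_gate_base_pt: "M \<noteq> [] \<Longrightarrow> \<not> beyond_gate M base_pt"
  by (simp add: base_pt_def)

context
  fixes b :: "real \<Rightarrow> xa_pt"
  assumes ray: "geodesic_ray b"
begin

lemma dXA_ray_lipschitz:
  assumes x: "wf_pt x" and s: "0 \<le> s" and t: "0 \<le> t"
  shows "\<bar>dXA x (b s) - dXA x (b t)\<bar> \<le> \<bar>s - t\<bar>"
  using dXA_triangle[OF x geodesic_ray_wf[OF ray t] geodesic_ray_wf[OF ray s]]
    dXA_triangle[OF x geodesic_ray_wf[OF ray s] geodesic_ray_wf[OF ray t]]
    geodesic_ray_dist[OF ray s t] geodesic_ray_dist[OF ray t s]
  by (simp add: abs_le_iff abs_minus_commute)

lemma ray_nearest_time_exists: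
  assumes x: "wf_pt x"
  shows "\<exists>t0\<ge>0. \<forall>t\<ge>0. dXA x (b t0) \<le> dXA x (b t)"
proof -
  define T where "T = 2 * dXA base_pt x"
  have T: "0 \<le> T"
    unfolding T_def using dXA_nonneg[OF wf_pt_base_pt x] by simp
  have cont: "continuous_on {0..T} (\<lambda>t. dXA x (b t))"
    unfolding continuous_on_iff
  proof (intro ballI allI impI)
    fix t e assume t: "t \<in> {0..T}" and e: "(0::real) < e"
    show "\<exists>d>0. \<forall>t'\<in>{0..T}. dist t' t < d \<longrightarrow> dist (dXA x (b t')) (dXA x (b t)) < e"
      using e t dXA_ray_lipschitz[OF x] by (intro exI[of _ e]) (force simp: dist_real_def)
  qed
  then obtain t0 where t0: "t0 \<in> {0..T}" and min: "\<forall>t\<in>{0..T}. dXA x (b t0) \<le> dXA x (b t)"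
    using continuous_attains_inf[OF compact_Icc _ cont] T by auto
  \<comment> \<open>beyond \<open>T\<close> the ray is farther from \<open>x\<close> than its starting point is\<close>
  have "dXA x (b t0) \<le> dXA x (b t)" if t: "0 \<le> t" for t
  proof (cases "t \<le> T")
    case False
    have "t \<le> dXA base_pt x + dXA x (b t)"
      using dXA_triangle[OF wf_pt_base_pt x geodesic_ray_wf[OF ray t]] geodesic_ray_norm[OF ray t] by simp
    moreover have "dXA x (b t0) \<le> dXA base_pt x"
      using min T geodesic_ray_base[OF ray] dXA_commute[of x base_pt] by force
    ultimately show ?thesis
      using False unfolding T_def by simp
  qed (use min t in simp)
  then show ?thesis
    using t0 by auto
qed

lemma setdist_ray_attained:
  assumes x: "wf_pt x"
  obtains t0 where "0 \<le> t0" "setdist x (b ` {0..}) = dXA x (b t0)"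
    "\<And>q. q \<in> b ` {0..} \<Longrightarrow> setdist x (b ` {0..}) \<le> dXA x q"
proof -
  obtain t0 where t0: "0 \<le> t0" and min: "\<forall>t\<ge>0. dXA x (b t0) \<le> dXA x (b t)"
    using ray_nearest_time_exists[OF x] by blast
  have "setdist x (b ` {0..}) = dXA x (b t0)"
    unfolding setdist_def by (rule cInf_eq_minimum) (use t0 min in auto)
  with that t0 min show ?thesis
    by auto
qed

lemma setdist_ray_le: "wf_pt x \<Longrightarrow> q \<in> b ` {0..} \<Longrightarrow> setdist x (b ` {0..}) \<le> dXA x q"
  using setdist_ray_attained by blast

lemma nearest_ray_nonempty:
  assumes "wf_pt x"
  obtains t where "0 \<le> t" "b t \<in> nearest x (b ` {0..})"
proof -
  obtain t where "0 \<le> t" "setdist x (b ` {0..}) = dXA x (b t)"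
    using setdist_ray_attained[OF assms] by blast
  with that show ?thesis
    by (simp add: nearest_def)
qed

lemma setdist_ray_nonneg:
  assumes "wf_pt x"
  shows "0 \<le> setdist x (b ` {0..})"
proof -
  obtain t where "0 \<le> t" "setdist x (b ` {0..}) = dXA x (b t)"
    using setdist_ray_attained[OF assms] by blast
  with assms show ?thesis
    using dXA_nonneg geodesic_ray_wf[OF ray] by simp
qed

lemma nearest_ray_self:
  assumes x: "wf_pt x" and xb: "x \<in> b ` {0..}"
  shows "nearest x (b ` {0..}) = {x}"
proof -
  have "setdist x (b ` {0..}) = 0"
    using setdist_ray_le[OF x xb] setdist_ray_nonneg[OF x] by simp
  moreover have "a = x" if "a \<in> b ` {0..}" "dXA x a = 0" for a
    using that dXA_eq_0_iff[OF x] geodesic_ray_wf[OF ray] by fastforce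
  ultimately show ?thesis
    using xb unfolding nearest_def by auto
qed

context
  fixes M :: "step list"
  assumes M: "M \<noteq> []"
begin

lemma ray_time_beyond_gate:
  assumes t: "0 \<le> t" and bt: "beyond_gate M (b t)"
  shows "t = dXA base_pt (entry_gate M) + dXA (entry_gate M) (b t)" and "0 < dXA (entry_gate M) (b t)"
proof -
  have "dXA (b t) base_pt = dXA (b t) (entry_gate M) + dXA (entry_gate M) base_pt"
    using dXA_split_at_entry_gate[OF M bt not_beyond_gate_base_pt[OF M]] .
  then show "t = dXA base_pt (entry_gate M) + dXA (entry_gate M) (b t)"
    using geodesic_ray_norm[OF ray t] dXA_commute[of "b t" base_pt] dXA_commute[of "b t" "entry_gate M"]
      dXA_commute[of "entry_gate M" base_pt]
    by linarith
  have "entry_gate M \<noteq> b t"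
    using not_beyond_gate_entry_gate[OF M] bt by metis
  then show "0 < dXA (entry_gate M) (b t)"
    using dXA_pos geodesic_ray_wf[OF ray t] by simp
qed

context
  fixes ts :: real
  assumes ts: "0 \<le> ts" and bts: "beyond_gate M (b ts)"
begin

lemma ray_at_entry_gate: "b (dXA base_pt (entry_gate M)) = entry_gate M"
proof -
  let ?u = "dXA base_pt (entry_gate M)"
  have u: "0 \<le> ?u"
    using dXA_nonneg by simp
  note tsu = ray_time_beyond_gate[OF ts bts]
  show ?thesis
  proof (cases "beyond_gate M (b ?u)")
    case True
    then show ?thesis
      using ray_time_beyond_gate[OF u] by force
  next
    case False
    have "dXA (b ts) (b ?u) = dXA (b ts) (entry_gate M) + dXA (entry_gate M) (b ?u)"
      using dXA_split_at_entry_gate[OF M bts False] .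
    moreover have "dXA (b ts) (b ?u) = ts - ?u"
      using geodesic_ray_dist[OF ray ts u] tsu by simp
    moreover have "dXA (b ts) (entry_gate M) = ts - ?u"
      using tsu dXA_commute[of "b ts" "entry_gate M"] by simp
    ultimately have "dXA (entry_gate M) (b ?u) = 0"
      by simp
    then show ?thesis
      using dXA_eq_0_iff[of "entry_gate M" "b ?u"] geodesic_ray_wf[OF ray u] by simp
  qed
qed

lemma ray_beyond_gate_iff:
  assumes t: "0 \<le> t"
  shows "beyond_gate M (b t) \<longleftrightarrow> dXA base_pt (entry_gate M) < t"
proof
  assume "beyond_gate M (b t)"
  then show "dXA base_pt (entry_gate M) < t"
    using ray_time_beyond_gate[OF t] by force
next
  let ?u = "dXA base_pt (entry_gate M)"
  assume ut: "?u < t"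
  show "beyond_gate M (b t)"
  proof (rule ccontr)
    assume nt: "\<not> beyond_gate M (b t)"
    have "dXA (b ts) (b t) = dXA (b ts) (entry_gate M) + dXA (entry_gate M) (b t)"
      using dXA_split_at_entry_gate[OF M bts nt] .
    moreover have "dXA (b ts) (entry_gate M) = ts - ?u"
      using ray_time_beyond_gate[OF ts bts] dXA_commute[of "b ts" "entry_gate M"] by simp
    moreover have "dXA (entry_gate M) (b t) = t - ?u"
      using ray_at_entry_gate geodesic_ray_dist[OF ray _ t, of ?u] ut dXA_nonneg[of base_pt] by simp
    moreover have "dXA (b ts) (b t) = \<bar>ts - t\<bar>"
      using geodesic_ray_dist[OF ray ts t] .
    ultimately show False
      using ut ray_time_beyond_gate[OF ts bts] by (simp add: abs_if split: if_splits)
  qed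
qed

lemma ray_on_entry_edge:
  assumes th: "0 \<le> th" "th < 1"
  shows "b (dXA base_pt (entry_gate M) + 1 - th) = (if th = 0 then flat_origin M else XPt M (Inr th))"
proof -
  let ?u = "dXA base_pt (entry_gate M)" and ?t = "dXA base_pt (entry_gate M) + 1 - th"
  have t: "0 \<le> ?t" and bt: "beyond_gate M (b ?t)"
    using th ray_beyond_gate_iff dXA_nonneg[of base_pt "entry_gate M"] by auto
  have d: "dXA (entry_gate M) (b ?t) = 1 - th"
    using ray_at_entry_gate geodesic_ray_dist[OF ray _ t, of ?u] th dXA_nonneg[of base_pt] by simp
  show ?thesis
  proof (cases "beyond_origin M (b ?t)")
    case True
    then have "dXA (b ?t) (entry_gate M) = dXA (b ?t) (flat_origin M) + 1"
      by (rule dXA_entry_gate_beyond_origin[OF M])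
    then have "th = 0" "dXA (flat_origin M) (b ?t) = 0"
      using d th dXA_commute dXA_nonneg[of "b ?t" "flat_origin M"] geodesic_ray_wf[OF ray t] by auto
    then show ?thesis
      using dXA_eq_0_iff[of "flat_origin M" "b ?t"] geodesic_ray_wf[OF ray t] by simp
  next
    case False
    then obtain th' where e: "b ?t = XPt M (Inr th')"
      using beyond_gate_edge[OF bt] by blast
    then have "th = th'"
      using d dXA_entry_gate_edge[OF M] by simp
    moreover have "th' \<noteq> 0"
      using geodesic_ray_wf[OF ray t] e by auto
    ultimately show ?thesis
      using e by simp
  qed
qed

lemma entry_gate_on_ray: "entry_gate M \<in> b ` {0..}"
  using ray_at_entry_gate dXA_nonneg[of base_pt "entry_gate M"] by force

lemma flat_origin_on_ray: "flat_origin M \<in> b ` {0..}"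
  using ray_on_entry_edge[of 0] dXA_nonneg[of base_pt "entry_gate M"]
  by (intro image_eqI[of _ _ "dXA base_pt (entry_gate M) + 1"]) auto

lemma entry_edge_on_ray: "0 < th \<Longrightarrow> th < 1 \<Longrightarrow> XPt M (Inr th) \<in> b ` {0..}"
  using ray_on_entry_edge[of th] dXA_nonneg[of base_pt "entry_gate M"]
  by (intro image_eqI[of _ _ "dXA base_pt (entry_gate M) + 1 - th"]) auto

lemma ray_pt_closer_than_entry_gate:
  assumes z: "wf_pt z" and bz: "beyond_gate M z"
  shows "\<exists>w\<in>b ` {0..}. dXA z w < dXA z (entry_gate M)"
proof (cases "beyond_origin M z")
  case True
  then show ?thesis
    using dXA_entry_gate_beyond_origin[OF M] flat_origin_on_ray by force
next
  case False
  then obtain th where zt: "z = XPt M (Inr th)"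
    using beyond_gate_edge[OF bz] by blast
  then have th: "0 < th" "th < 1"
    using z by auto
  moreover have "dXA z (entry_gate M) = 1 - th"
    using dXA_entry_gate_edge[OF M] zt dXA_commute by metis
  ultimately show ?thesis
    using entry_edge_on_ray zt by force
qed

lemma beyond_gate_nearest_iff:
  assumes z: "wf_pt z" and a: "a \<in> nearest z (b ` {0..})"
  shows "beyond_gate M z \<longleftrightarrow> beyond_gate M a"
proof -
  obtain t where t: "0 \<le> t" "a = b t"
    using a unfolding nearest_def by auto
  have wa: "wf_pt a"
    using geodesic_ray_wf[OF ray t(1)] t by simp
  have da: "dXA z a = setdist z (b ` {0..})"
    using a unfolding nearest_def by auto
  have sG: "setdist z (b ` {0..}) \<le> dXA z (entry_gate M)"
    using setdist_ray_le[OF z entry_gate_on_ray] .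
  show ?thesis
  proof
    assume bz: "beyond_gate M z"
    show "beyond_gate M a"
    proof (rule ccontr)
      assume "\<not> beyond_gate M a"
      then have "dXA z (entry_gate M) \<le> dXA z a"
        using dXA_split_at_entry_gate[OF M bz] dXA_nonneg[OF wf_pt_entry_gate wa] by simp
      moreover obtain w where "w \<in> b ` {0..}" "dXA z w < dXA z (entry_gate M)"
        using ray_pt_closer_than_entry_gate[OF z bz] by blast
      ultimately show False
        using da setdist_ray_le[OF z] by fastforce
    qed
  next
    assume ba: "beyond_gate M a"
    show "beyond_gate M z"
    proof (rule ccontr)
      assume nz: "\<not> beyond_gate M z"
      have "dXA a z = dXA a (entry_gate M) + dXA (entry_gate M) z"
        using dXA_split_at_entry_gate[OF M ba nz] .
      moreover have "entry_gate M \<noteq> a"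
        using not_beyond_gate_entry_gate[OF M] ba by metis
      then have "0 < dXA a (entry_gate M)"
        using dXA_pos[OF wa wf_pt_entry_gate] by metis
      ultimately show False
        using da sG dXA_commute[of a z] dXA_commute[of "entry_gate M" z] by linarith
    qed
  qed
qed

end

end

lemma nearest_ray_edge_pt:
  assumes z: "wf_pt z" and q: "q \<in> nearest z (b ` {0..})" and qe: "q = XPt M (Inr th)"
  shows "z = q"
proof -
  obtain ts where ts: "0 \<le> ts" "q = b ts"
    using q unfolding nearest_def by auto
  then have "wf_pt (XPt M (Inr th))"
    using geodesic_ray_wf[OF ray ts(1)] qe by simp
  then have M: "M \<noteq> []" and th: "0 < th" "th < 1"
    by auto
  have bts: "beyond_gate M (b ts)"
    using ts qe by (metis beyond_gate.simps order_refl take_all)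
  have bz: "beyond_gate M z"
    using beyond_gate_nearest_iff[OF M ts(1) bts z q] bts ts by simp
  show ?thesis
  proof (cases "beyond_origin M z")
    case True
    have "\<not> beyond_origin M q"
      using qe by simp
    then have "dXA z q = dXA z (flat_origin M) + th"
      using dXA_split_at_flat_origin[OF True] dXA_flat_origin_edge qe by simp
    moreover have "setdist z (b ` {0..}) \<le> dXA z (flat_origin M)"
      using setdist_ray_le[OF z flat_origin_on_ray[OF M ts(1) bts]] .
    moreover have "dXA z q = setdist z (b ` {0..})"
      using q unfolding nearest_def by auto
    ultimately show ?thesis
      using th by linarith
  next
    case False
    then obtain th' where zt: "z = XPt M (Inr th')"
      using beyond_gate_edge[OF bz] by blast
    then have "0 < th'" "th' < 1"
      using z by auto
    then have "z \<in> b ` {0..}"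
      using entry_edge_on_ray[OF M ts(1) bts] zt by simp
    then show ?thesis
      using nearest_ray_self[OF z] q by simp
  qed
qed

lemma ray_segment_in_flat:
  assumes s: "0 \<le> s" and ss: "s \<le> s'" and bs: "b s = XPt L (Inl v)" and bs': "b s' = XPt L (Inl v')"
  shows "b ` {s..s'} \<subseteq> flat L"
proof
  fix z assume "z \<in> b ` {s..s'}"
  then obtain t where t: "s \<le> t" "t \<le> s'" and z: "z = b t"
    by auto
  have t0: "0 \<le> t" and s': "0 \<le> s'"
    using s t by auto
  have wt: "wf_pt (b t)"
    using geodesic_ray_wf[OF ray t0] .
  have "dist v (flat_proj L (b t)) + flat_height L (b t) = t - s"
    using geodesic_ray_dist[OF ray s t0] t bs dXA_flat_pt by simp
  moreover have "dist v' (flat_proj L (b t)) + flat_height L (b t) = s' - t"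
    using geodesic_ray_dist[OF ray s' t0] t bs' dXA_flat_pt by simp
  moreover have "dist v v' = s' - s"
    using geodesic_ray_dist[OF ray s s'] ss bs bs' dXA_flat_pt by (simp add: foot_def height_def)
  moreover have "dist v v' \<le> dist v (flat_proj L (b t)) + dist v' (flat_proj L (b t))"
    using dist_triangle[of v v' "flat_proj L (b t)"] by (simp add: dist_commute)
  ultimately have "flat_height L (b t) = 0"
    using flat_height_nonneg[OF wt, of L] by linarith
  then have "b t = XPt L (Inl (flat_proj L (b t)))"
    using flat_height_eq_0[OF wt] by simp
  then show "z \<in> flat L"
    unfolding flat_def z by blast
qed

context
  fixes x y :: xa_pt
  assumes x: "wf_pt x" and y: "wf_pt y" and dxy: "dXA x y \<le> setdist x (b ` {0..})"
begin

lemma nearest_union_edge_pt: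
  assumes e: "e \<in> nearest x (b ` {0..}) \<union> nearest y (b ` {0..})" and ee: "e = XPt M (Inr th)"
    and a: "a \<in> nearest x (b ` {0..}) \<union> nearest y (b ` {0..})"
  shows "a = e"
proof -
  have "a = e" if ex: "e \<in> nearest x (b ` {0..})"
  proof -
    have xe: "x = e"
      using nearest_ray_edge_pt[OF x ex ee] .
    then have nx: "nearest x (b ` {0..}) = {x}"
      using nearest_ray_self[OF x] ex unfolding nearest_def by auto
    then have "setdist x (b ` {0..}) = 0"
      unfolding nearest_def by auto
    then have "x = y"
      using dxy dXA_nonneg[OF x y] dXA_eq_0_iff[OF x y] by simp
    then show ?thesis
      using a nx xe by simp
  qed
  moreover have "e \<in> nearest x (b ` {0..})" if ey: "e \<in> nearest y (b ` {0..})"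
  proof -
    have ye: "y = e"
      using nearest_ray_edge_pt[OF y ey ee] .
    then have yb: "y \<in> b ` {0..}"
      using ey unfolding nearest_def by auto
    then show ?thesis
      using setdist_ray_le[OF x yb] dxy ye unfolding nearest_def by auto
  qed
  ultimately show ?thesis
    using e by blast
qed

lemma nearest_union_same_side:
  assumes M: "M \<noteq> []"
    and a: "a \<in> nearest x (b ` {0..}) \<union> nearest y (b ` {0..})"
    and a': "a' \<in> nearest x (b ` {0..}) \<union> nearest y (b ` {0..})"
    and ba': "beyond_gate M a'"
  shows "beyond_gate M a"
proof (rule ccontr)
  assume na: "\<not> beyond_gate M a"
  obtain s' where s': "0 \<le> s'" "a' = b s'"
    using a' unfolding nearest_def by auto
  have bs': "beyond_gate M (b s')"
    using ba' s' by simp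
  note side = beyond_gate_nearest_iff[OF M s'(1) bs']
  have "(\<not> beyond_gate M x \<and> beyond_gate M y) \<or> (beyond_gate M x \<and> \<not> beyond_gate M y)"
    using a a' na ba' side[OF x] side[OF y] by blast
  then show False
  proof
    assume c: "\<not> beyond_gate M x \<and> beyond_gate M y"
    have "dXA y x = dXA y (entry_gate M) + dXA (entry_gate M) x"
      using dXA_split_at_entry_gate[OF M] c by blast
    moreover have "entry_gate M \<noteq> y"
      using not_beyond_gate_entry_gate[OF M] c by metis
    then have "0 < dXA y (entry_gate M)"
      using dXA_pos[OF y wf_pt_entry_gate] by metis
    moreover have "setdist x (b ` {0..}) \<le> dXA x (entry_gate M)"
      using setdist_ray_le[OF x entry_gate_on_ray[OF M s'(1) bs']] .
    ultimately show False
      using dxy dXA_commute[of y x] dXA_commute[of "entry_gate M" x] by linarith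
  next
    assume c: "beyond_gate M x \<and> \<not> beyond_gate M y"
    obtain w where w: "w \<in> b ` {0..}" "dXA x w < dXA x (entry_gate M)"
      using ray_pt_closer_than_entry_gate[OF M s'(1) bs' x] c by blast
    have "dXA x (entry_gate M) \<le> dXA x y"
      using dXA_split_at_entry_gate[OF M] c dXA_nonneg[OF wf_pt_entry_gate y] by fastforce
    then show False
      using dxy w setdist_ray_le[OF x w(1)] by linarith
  qed
qed

lemma nearest_union_same_flat:
  assumes a: "XPt L p \<in> nearest x (b ` {0..}) \<union> nearest y (b ` {0..})"
    and a': "XPt L' p' \<in> nearest x (b ` {0..}) \<union> nearest y (b ` {0..})"
  shows "L = L'"
proof -
  have "take (length L) L' = L" if "L \<noteq> []"
    using nearest_union_same_side[OF that a' a] by simp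
  moreover have "take (length L') L = L'" if "L' \<noteq> []"
    using nearest_union_same_side[OF that a a'] by simp
  ultimately show ?thesis
    by (metis length_take min.absorb_iff1 min.commute take_all take_eq_Nil)
qed

lemma nearest_union_segment_in_flat:
  assumes s: "0 \<le> s" and ss: "s < s'"
    and p: "b s \<in> nearest x (b ` {0..}) \<union> nearest y (b ` {0..})"
    and q: "b s' \<in> nearest x (b ` {0..}) \<union> nearest y (b ` {0..})"
  shows "\<exists>L. reduced L \<and> b ` {s..s'} \<subseteq> flat L"
proof -
  have s': "0 \<le> s'"
    using s ss by simp
  have neq: "b s \<noteq> b s'"
    using geodesic_ray_dist[OF ray s s'] ss by auto
  obtain L ps L' ps' where bs: "b s = XPt L ps" and bs': "b s' = XPt L' ps'"
    by (cases "b s"; cases "b s'")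
  have "L' = L"
    using nearest_union_same_flat p q bs bs' by simp
  moreover obtain v where "ps = Inl v"
    using nearest_union_edge_pt[OF p _ q] neq bs by (cases ps) auto
  moreover obtain v' where "ps' = Inl v'"
    using nearest_union_edge_pt[OF q _ p] neq bs' by (cases ps') auto
  moreover have "reduced L"
    using ray s bs unfolding geodesic_ray_def XA_def by auto
  ultimately show ?thesis
    using ray_segment_in_flat[OF s less_imp_le[OF ss]] bs bs' by blast
qed

end

end

section \<open>The function \<open>\<kappa>\<close>\<close>

context
  fixes k :: "real \<Rightarrow> real"
  assumes k: "kappa_fn k"
begin

lemma kappa_fn_ge_1: "0 \<le> t \<Longrightarrow> 1 \<le> k t"
  using k unfolding kappa_fn_def by blast

lemma kappa_fn_mono: "0 \<le> s \<Longrightarrow> s \<le> t \<Longrightarrow> k s \<le> k t"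
  using k unfolding kappa_fn_def by (auto intro: mono_onD)

lemma kappa_fn_subadditive: "0 \<le> a \<Longrightarrow> 0 \<le> b \<Longrightarrow> k (a + b) \<le> k a + k b"
  using k kappa_fn_ge_1[of 0] unfolding kappa_fn_def by (intro concave_subadditive) auto

lemma kappa_fn_times_4: "0 \<le> X \<Longrightarrow> k (4 * X) \<le> 4 * k X"
  using kappa_fn_subadditive[of X X] kappa_fn_subadditive[of "2 * X" "2 * X"] by simp

lemma kappa_fn_absorb:
  assumes c: "0 < c"
  obtains C where "0 \<le> C" and "\<And>t l. 0 \<le> t \<Longrightarrow> l \<le> c * k t + c * k l \<Longrightarrow> l \<le> C * k t"
proof -
  have "((\<lambda>t. k t / t) \<longlongrightarrow> 0) at_top"
    using k unfolding kappa_fn_def by blast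
  then have "eventually (\<lambda>t. k t / t < 1 / (2 * c)) at_top"
    using c by (intro order_tendstoD(2)) auto
  then obtain T0 where T0: "\<And>t. T0 \<le> t \<Longrightarrow> k t / t < 1 / (2 * c)"
    unfolding eventually_at_top_linorder by blast
  define T where "T = max T0 1"
  have T: "c * k l \<le> l / 2" if "T \<le> l" for l
  proof -
    have "k l / l < 1 / (2 * c)" "0 < l"
      using that T0 unfolding T_def by auto
    then show ?thesis
      using c by (simp add: field_simps)
  qed
  show ?thesis
  proof
    show "0 \<le> 2 * c + T"
      using c unfolding T_def by simp
    fix t l assume t: "0 \<le> t" and l: "l \<le> c * k t + c * k l"
    have "T \<le> T * k t" "0 \<le> 2 * c * k t"
      using kappa_fn_ge_1[OF t] c unfolding T_def by (simp_all add: mult_le_cancel_left1)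
    moreover have "l \<le> 2 * c * k t \<or> l \<le> T"
      using l T[of l] by (cases "T \<le> l") auto
    moreover have "0 \<le> T * k t"
      using kappa_fn_ge_1[OF t] unfolding T_def by simp
    ultimately show "l \<le> (2 * c + T) * k t"
      by (auto simp: distrib_right)
  qed
qed

end

section \<open>Contraction versus flat segments\<close>

lemma xdiam_le:
  assumes "S \<noteq> {}" and "\<And>a c. a \<in> S \<Longrightarrow> c \<in> S \<Longrightarrow> dXA a c \<le> D"
  shows "xdiam S \<le> D"
  unfolding xdiam_def
proof (rule cSup_least)
  show "{dXA a c |a c. a \<in> S \<and> c \<in> S} \<noteq> {}"
    using assms(1) by blast
qed (use assms(2) in blast)

lemma xdiam_pair: "xdiam {p, q} = dXA p q" if "wf_pt p" "wf_pt q"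
proof -
  have "{dXA a c | a c. a \<in> {p, q} \<and> c \<in> {p, q}} = {dXA p p, dXA p q, dXA q p, dXA q q}"
    by blast
  then have "{dXA a c | a c. a \<in> {p, q} \<and> c \<in> {p, q}} = {0, dXA p q}"
    using dXA_commute[of q p] by auto
  then show ?thesis
    using dXA_nonneg[OF that] unfolding xdiam_def by (auto intro: cSup_eq_maximum)
qed

context
  fixes b :: "real \<Rightarrow> xa_pt"
  assumes ray: "geodesic_ray b"
begin

context
  fixes x y :: xa_pt
  assumes x: "wf_pt x" and y: "wf_pt y" and dxy: "dXA x y \<le> setdist x (b ` {0..})"
begin

lemma nearest_union_bound:
  assumes a: "a \<in> nearest x (b ` {0..}) \<union> nearest y (b ` {0..})"
  obtains s where "0 \<le> s" "a = b s" "s \<le> 4 * dXA base_pt x"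
proof -
  let ?X = "dXA base_pt x"
  have o: "base_pt \<in> b ` {0..}"
    using geodesic_ray_base[OF ray] by force
  obtain s where s: "0 \<le> s" "a = b s"
    using a unfolding nearest_def by auto
  have sa: "s = dXA base_pt a"
    using geodesic_ray_norm[OF ray s(1)] s by simp
  have wa: "wf_pt a"
    using geodesic_ray_wf[OF ray s(1)] s by simp
  have sx: "setdist x (b ` {0..}) \<le> ?X"
    using setdist_ray_le[OF ray x o] dXA_commute[of x base_pt] by simp
  have X: "0 \<le> ?X"
    using dXA_nonneg[OF wf_pt_base_pt x] .
  have "s \<le> 4 * ?X"
  proof (cases "a \<in> nearest x (b ` {0..})")
    case True
    then have "dXA x a = setdist x (b ` {0..})"
      unfolding nearest_def by simp
    then show ?thesis
      using sa sx X dXA_triangle[OF wf_pt_base_pt x wa] by linarith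
  next
    case False
    then have "dXA y a = setdist y (b ` {0..})"
      using a unfolding nearest_def by auto
    moreover have "setdist y (b ` {0..}) \<le> dXA y base_pt"
      using setdist_ray_le[OF ray y o] .
    ultimately show ?thesis
      using sa sx dxy X dXA_triangle[OF y x wf_pt_base_pt] dXA_triangle[OF wf_pt_base_pt y wa]
        dXA_triangle[OF wf_pt_base_pt x y] dXA_commute[of x y] dXA_commute[of x base_pt]
        dXA_commute[of y base_pt]
      by linarith
  qed
  with s that show ?thesis
    by blast
qed

lemma nearest_union_dist_le:
  assumes k: "kappa_fn k"
    and c: "\<And>t1 t2. 0 \<le> t1 \<Longrightarrow> t1 \<le> t2 \<Longrightarrow> (\<exists>L. reduced L \<and> b ` {t1..t2} \<subseteq> flat L) \<Longrightarrow>
      \<bar>t1 - t2\<bar> \<le> c * k t1"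
    and a: "a \<in> nearest x (b ` {0..}) \<union> nearest y (b ` {0..})"
    and a': "a' \<in> nearest x (b ` {0..}) \<union> nearest y (b ` {0..})"
  shows "dXA a a' \<le> (4 * max c 0) * k (dXA base_pt x)"
proof -
  let ?N = "nearest x (b ` {0..}) \<union> nearest y (b ` {0..})" and ?X = "dXA base_pt x"
  have X: "0 \<le> ?X"
    using dXA_nonneg[OF wf_pt_base_pt x] .
  have ordered: "s' - s \<le> (4 * max c 0) * k ?X"
    if s: "0 \<le> s" "s \<le> s'" "s \<le> 4 * ?X" and "b s \<in> ?N" "b s' \<in> ?N" for s s'
  proof (cases "s = s'")
    case True
    then show ?thesis
      using kappa_fn_ge_1[OF k X] by simp
  next
    case False
    then have "\<exists>L. reduced L \<and> b ` {s..s'} \<subseteq> flat L"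
      using nearest_union_segment_in_flat[OF ray x y dxy s(1)] that s by simp
    then have "s' - s \<le> c * k s"
      using c[OF s(1,2)] s(2) by simp
    also have "\<dots> \<le> max c 0 * k s"
      using kappa_fn_ge_1[OF k s(1)] by (intro mult_right_mono) auto
    also have "\<dots> \<le> max c 0 * (4 * k ?X)"
      using kappa_fn_mono[OF k s(1,3)] kappa_fn_times_4[OF k X] by (intro mult_left_mono) auto
    finally show ?thesis
      by simp
  qed
  obtain s where s: "0 \<le> s" "a = b s" "s \<le> 4 * ?X"
    using nearest_union_bound[OF a] by blast
  obtain s' where s': "0 \<le> s'" "a' = b s'" "s' \<le> 4 * ?X"
    using nearest_union_bound[OF a'] by blast
  have "dXA a a' = \<bar>s - s'\<bar>"
    using geodesic_ray_dist[OF ray s(1) s'(1)] s s' by simp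
  then show ?thesis
    using ordered[of s s'] ordered[of s' s] a a' s s' by (cases "s \<le> s'") simp_all
qed

end

theorem kappa_contracting_if_flat_segments_bounded:
  assumes k: "kappa_fn k"
    and c: "\<And>t1 t2. 0 \<le> t1 \<Longrightarrow> t1 \<le> t2 \<Longrightarrow> (\<exists>L. reduced L \<and> b ` {t1..t2} \<subseteq> flat L) \<Longrightarrow>
      \<bar>t1 - t2\<bar> \<le> c * k t1"
  shows "kappa_contracting k (b ` {0..})"
proof -
  have "xdiam (nearest x (b ` {0..}) \<union> nearest y (b ` {0..})) \<le> (4 * max c 0) * k (dXA base_pt x)"
    if "x \<in> XA" "y \<in> XA" and dxy: "dXA x y \<le> setdist x (b ` {0..})" for x y
  proof (rule xdiam_le)
    have x: "wf_pt x" and y: "wf_pt y"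
      using that wf_pt_if_XA by auto
    then show "nearest x (b ` {0..}) \<union> nearest y (b ` {0..}) \<noteq> {}"
      using nearest_ray_nonempty[OF ray x] by blast
    show "dXA a a' \<le> (4 * max c 0) * k (dXA base_pt x)"
      if "a \<in> nearest x (b ` {0..}) \<union> nearest y (b ` {0..})"
        and "a' \<in> nearest x (b ` {0..}) \<union> nearest y (b ` {0..})" for a a'
      using nearest_union_dist_le[OF x y dxy k c that] .
  qed
  then show ?thesis
    unfolding kappa_contracting_def by blast
qed

lemma ray_flat_proj_aligned:
  assumes t1: "0 \<le> t1" and t12: "t1 \<le> t2" and t: "0 \<le> t"
    and a: "b t1 = XPt L (Inl a)" and c: "b t2 = XPt L (Inl c)"
  defines "p \<equiv> flat_proj L (b t)"
  shows "dist a p = dist a c + dist c p \<or> dist c p = dist c a + dist a p \<or> dist a c = dist a p + dist p c"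
proof -
  let ?H = "flat_height L (b t)"
  have H: "0 \<le> ?H"
    using flat_height_nonneg geodesic_ray_wf[OF ray t] by blast
  have f1: "\<bar>t1 - t\<bar> = dist a p + ?H"
    using geodesic_ray_dist[OF ray t1 t] a dXA_flat_pt unfolding p_def by simp
  have f2: "\<bar>t2 - t\<bar> = dist c p + ?H"
    using geodesic_ray_dist[OF ray _ t, of t2] t1 t12 c dXA_flat_pt unfolding p_def by simp
  have ac: "dist a c = t2 - t1"
    using geodesic_ray_dist[OF ray t1, of t2] t1 t12 a c dXA_flat_pt by (simp add: foot_def height_def)
  have "dist a c \<le> dist a p + dist p c"
    by (rule dist_triangle)
  then consider "t2 \<le> t" | "t \<le> t1" | "t1 < t" "t < t2"
    by linarith
  then show ?thesis
  proof cases
    case 1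
    with f1 f2 ac t12 show ?thesis
      by simp
  next
    case 2
    with f1 f2 ac t12 show ?thesis
      by (simp add: dist_commute)
  next
    case 3
    with f1 f2 ac H \<open>dist a c \<le> dist a p + dist p c\<close> show ?thesis
      by (simp add: dist_commute)
  qed
qed

lemma dXA_offset_ray_ge:
  assumes t1: "0 \<le> t1" and t12: "t1 \<le> t2" and t: "0 \<le> t"
    and a: "b t1 = XPt L (Inl a)" and c: "b t2 = XPt L (Inl c)" and ac: "a \<noteq> c" and q: "q = a \<or> q = c"
  shows "dist a c \<le> dXA (XPt L (Inl (q + rot90 (a - c)))) (b t)"
    and "dXA (XPt L (Inl (q + rot90 (a - c)))) (b t) = dist a c \<Longrightarrow> b t = XPt L (Inl q)"
proof -
  let ?n = "rot90 (a - c)" and ?p = "flat_proj L (b t)" and ?H = "flat_height L (b t)"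
  have wt: "wf_pt (b t)"
    using geodesic_ray_wf[OF ray t] .
  have "orthogonal (c - a) ?n"
    using orthogonal_rot90[of "a - c"] by (simp add: orthogonal_def inner_diff_left)
  moreover have "dist a ?p = dist a c + dist c ?p \<or> dist c ?p = dist c a + dist a ?p \<or>
      dist a c = dist a ?p + dist ?p c"
    using ray_flat_proj_aligned[OF t1 t12 t a c] .
  ultimately have "orthogonal (?p - a) ?n"
    by (rule orthogonal_if_dist_additive[OF _ ac])
  with \<open>orthogonal (c - a) ?n\<close> have "inner (q - ?p) ?n = 0"
    using q by (auto simp: orthogonal_def inner_diff_left)
  then have orth: "orthogonal ?n (q - ?p)"
    by (simp add: orthogonal_def inner_commute)
  note ge = dist_orthogonal_offset_ge[OF orth]
  have d: "dXA (XPt L (Inl (q + ?n))) (b t) = dist (q + ?n) ?p + ?H"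
    by (rule dXA_flat_pt)
  have n: "norm ?n = dist a c"
    by (simp add: dist_norm)
  have H: "0 \<le> ?H"
    using flat_height_nonneg[OF wt] .
  show "dist a c \<le> dXA (XPt L (Inl (q + ?n))) (b t)"
    using d ge(1) n H by linarith
  assume "dXA (XPt L (Inl (q + ?n))) (b t) = dist a c"
  then have "?H = 0" "dist (q + ?n) ?p = norm ?n"
    using d ge(1) n H by linarith+
  then have "b t = XPt L (Inl ?p)" and "?p = q"
    using flat_height_eq_0[OF wt] ge(2) by blast+
  then show "b t = XPt L (Inl q)"
    by simp
qed

lemma nearest_ray_singleton:
  assumes t0: "0 \<le> t0" and l: "dXA x (b t0) = l" and ge: "\<And>t. 0 \<le> t \<Longrightarrow> l \<le> dXA x (b t)"
    and eq: "\<And>t. 0 \<le> t \<Longrightarrow> dXA x (b t) = l \<Longrightarrow> b t = b t0"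
  shows "setdist x (b ` {0..}) = l" and "nearest x (b ` {0..}) = {b t0}"
proof -
  show s: "setdist x (b ` {0..}) = l"
    unfolding setdist_def using t0 l ge by (intro cInf_eq_minimum) auto
  show "nearest x (b ` {0..}) = {b t0}"
  proof
    show "nearest x (b ` {0..}) \<subseteq> {b t0}"
    proof
      fix z assume "z \<in> nearest x (b ` {0..})"
      then obtain t where "0 \<le> t" "z = b t" "dXA x (b t) = l"
        using s unfolding nearest_def by auto
      then show "z \<in> {b t0}"
        using eq[of t] by simp
    qed
    show "{b t0} \<subseteq> nearest x (b ` {0..})"
      using s t0 l unfolding nearest_def by simp
  qed
qed

lemma flat_segment_le_contraction:
  assumes cc: "\<forall>x\<in>XA. \<forall>y\<in>XA. dXA x y \<le> setdist x (b ` {0..}) \<longrightarrow>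
      xdiam (nearest x (b ` {0..}) \<union> nearest y (b ` {0..})) \<le> cc * k (dXA base_pt x)"
    and L: "reduced L" and t1: "0 \<le> t1" and lt: "t1 < t2" and sub: "b ` {t1..t2} \<subseteq> flat L"
  obtains X where "0 \<le> X" "X \<le> t2" "t2 - t1 \<le> cc * k X"
proof -
  have t2: "0 \<le> t2"
    using t1 lt by simp
  have "b t1 \<in> flat L" "b t2 \<in> flat L"
    using sub lt by auto
  then obtain a c where a: "b t1 = XPt L (Inl a)" and c: "b t2 = XPt L (Inl c)"
    unfolding flat_def by blast
  have ac: "dist a c = t2 - t1"
    using geodesic_ray_dist[OF ray t1 t2] lt a c dXA_flat_pt by (simp add: foot_def height_def)
  then have "a \<noteq> c"
    using lt by auto
  define x where "x = XPt L (Inl (a + rot90 (a - c)))"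
  define y where "y = XPt L (Inl (c + rot90 (a - c)))"
  note ge = dXA_offset_ray_ge[OF t1 less_imp_le[OF lt] _ a c \<open>a \<noteq> c\<close>]
  have dx: "dXA x (b t1) = dist a c" and dy: "dXA y (b t2) = dist a c"
    using a c unfolding x_def y_def by (simp_all add: dXA_flat_pt foot_def height_def dist_norm)
  have "dist a c \<le> dXA x (b t)" "dist a c \<le> dXA y (b t)" if "0 \<le> t" for t
    using ge(1)[OF that] unfolding x_def y_def by simp_all
  moreover have "b t = b t1" if "0 \<le> t" "dXA x (b t) = dist a c" for t
    using ge(2)[OF that(1), of a] that(2) a unfolding x_def by simp
  moreover have "b t = b t2" if "0 \<le> t" "dXA y (b t) = dist a c" for t
    using ge(2)[OF that(1), of c] that(2) c unfolding y_def by simp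
  ultimately have nx: "setdist x (b ` {0..}) = dist a c" "nearest x (b ` {0..}) = {b t1}"
    and ny: "nearest y (b ` {0..}) = {b t2}"
    using nearest_ray_singleton[OF t1 dx] nearest_ray_singleton[OF t2 dy] by blast+
  have dxy: "dXA x y = dist a c"
    unfolding x_def y_def by (simp add: dXA_flat_pt foot_def height_def)
  have "x \<in> XA" "y \<in> XA"
    unfolding x_def y_def XA_def using L by auto
  then have "xdiam (nearest x (b ` {0..}) \<union> nearest y (b ` {0..})) \<le> cc * k (dXA base_pt x)"
    using cc dxy nx(1) by simp
  then have "xdiam {b t1, b t2} \<le> cc * k (dXA base_pt x)"
    unfolding nx(2) ny by (simp add: insert_commute)
  moreover have "xdiam {b t1, b t2} = t2 - t1"
    using xdiam_pair geodesic_ray_wf[OF ray] geodesic_ray_dist[OF ray t1 t2] t1 t2 lt by simp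
  moreover have "dXA base_pt x \<le> t2"
    using dXA_triangle[OF wf_pt_base_pt geodesic_ray_wf[OF ray t1], of x] geodesic_ray_norm[OF ray t1]
      dx dXA_commute[of x "b t1"] ac unfolding x_def by simp
  ultimately show ?thesis
    using that dXA_nonneg[of base_pt x] unfolding x_def by simp
qed

theorem flat_segments_bounded_if_kappa_contracting:
  assumes k: "kappa_fn k" and kc: "kappa_contracting k (b ` {0..})"
  shows "\<exists>c. \<forall>t1 t2. 0 \<le> t1 \<longrightarrow> t1 \<le> t2 \<longrightarrow> (\<exists>L. reduced L \<and> b ` {t1..t2} \<subseteq> flat L) \<longrightarrow>
    \<bar>t1 - t2\<bar> \<le> c * k t1"
proof -
  obtain cc where cc: "\<forall>x\<in>XA. \<forall>y\<in>XA. dXA x y \<le> setdist x (b ` {0..}) \<longrightarrow>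
      xdiam (nearest x (b ` {0..}) \<union> nearest y (b ` {0..})) \<le> cc * k (dXA base_pt x)"
    using kc unfolding kappa_contracting_def by blast
  define c' where "c' = max cc 1"
  have "0 < c'"
    unfolding c'_def by simp
  then obtain C where C: "0 \<le> C" "\<And>t l. 0 \<le> t \<Longrightarrow> l \<le> c' * k t + c' * k l \<Longrightarrow> l \<le> C * k t"
    using kappa_fn_absorb[OF k] by blast
  have "\<bar>t1 - t2\<bar> \<le> C * k t1"
    if t1: "0 \<le> t1" and t12: "t1 \<le> t2" and fl: "\<exists>L. reduced L \<and> b ` {t1..t2} \<subseteq> flat L" for t1 t2
  proof (cases "t1 = t2")
    case True
    then show ?thesis
      using kappa_fn_ge_1[OF k t1] C(1) by simp
  next
    case False
    then have lt: "t1 < t2"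
      using t12 by simp
    define l where "l = t2 - t1"
    obtain X where X: "0 \<le> X" "X \<le> t2" "l \<le> cc * k X"
      using flat_segment_le_contraction[OF cc _ t1 lt] fl unfolding l_def by blast
    have "cc * k X \<le> c' * k X"
      using kappa_fn_ge_1[OF k X(1)] unfolding c'_def by (intro mult_right_mono) auto
    also have "\<dots> \<le> c' * k t2"
      using kappa_fn_mono[OF k X(1,2)] \<open>0 < c'\<close> by simp
    also have "\<dots> \<le> c' * (k t1 + k l)"
      using kappa_fn_subadditive[OF k t1, of l] lt \<open>0 < c'\<close> unfolding l_def by simp
    finally have "l \<le> c' * k t1 + c' * k l"
      using X(3) by (simp add: distrib_left)
    then show ?thesis
      using C(2)[OF t1] lt unfolding l_def by simp
  qed
  then show ?thesis
    by blast
qed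

end

theorem lemma6p2:
  fixes b :: "real \<Rightarrow> xa_pt" and kappa :: "real \<Rightarrow> real"
  assumes "kappa_fn kappa"
    and "geodesic_ray b"
  shows "kappa_contracting kappa (b ` {0..}) \<longleftrightarrow>
    (\<exists>c. \<forall>t1 t2. 0 \<le> t1 \<longrightarrow> t1 \<le> t2 \<longrightarrow>
        (\<exists>L. reduced L \<and> b ` {t1..t2} \<subseteq> flat L) \<longrightarrow>
        \<bar>t1 - t2\<bar> \<le> c * kappa t1)"
  using flat_segments_bounded_if_kappa_contracting[OF assms(2,1)]
    kappa_contracting_if_flat_segments_bounded[OF assms(2,1)] by blast

end
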